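(* Fix $\alpha\in\mathbb{D}\setminus\{0\}$, let $\psi(z)=\frac{\sqrt{1-|\alpha|^2}}{1-\bar\alpha z}$ and $\theta(z)=\frac{\bar\alpha}{\alpha}\frac{\alpha-z}{1-\bar\alpha z}$, let $W_{\psi,\theta}f=\psi\cdot(f\circ\theta)$ on $H^2(\mathbb{D})$, and let $C_{\psi,\theta}=W_{\psi,\theta}J_{H^2(\mathbb{D})}$, i.e. $(C_{\psi,\theta}f)(z)=\psi(z)\overline{f(\overline{\theta(z)})}$, which is a conjugation on $H^2(\mathbb{D})$. Let $\varphi=\sum_{n=-\infty}^\infty\varphi_nz^n\in L^\infty(\mathbb{T})$. Then $T_\varphi$ is $C_{\psi,\theta}$-symmetric if and only if \[ \varphi_{m-n}=\sum_{i,j=0}^\infty u_{m,j}\,\varphi_{i-j}\,\overline{u_{i,n}}\qquad(m,n\in\mathbb{Z}_+), \] where \[ u_{i,j}=\sqrt{1-|\alpha|^2}\sum_{m=0}^{\min\{i,j\}}\frac{(-1)^m}{\alpha^m}\binom{i}{m}\bar\alpha^{\,i+j-m}\binom{i+j-m}{i}\qquad(i,j\in\mathbb{Z}_+). \]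
   Context: A conjugation is an anti-linear, involutive, isometric map; $T$ is $C$-symmetric if $CT^*C=T$. $H^2(\mathbb{D})$ is the Hardy space of the disc with basis $\{z^n\}$; $J_{H^2(\mathbb{D})}(\sum a_nz^n)=\sum\bar a_nz^n$; $T_\varphi f=P_{H^2(\mathbb{D})}(\varphi f)$. (The numbers $u_{i,j}$ equal $\langle W_{\psi,\theta}z^i,z^j\rangle$.) *)

theory Defs
  imports "HOL-Analysis.Analysis"
begin

text \<open>The Hardy space H^2(D) is modelled via the orthonormal basis z^n:
  an element is its sequence of Taylor coefficients (square summable).\<close>

definition H2 :: "(nat \<Rightarrow> complex) set" where
  "H2 = {a. summable (\<lambda>n. (cmod (a n))\<^sup>2)}"

definition h2_inner :: "(nat \<Rightarrow> complex) \<Rightarrow> (nat \<Rightarrow> complex) \<Rightarrow> complex" where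
  "h2_inner a b = (\<Sum>n. a n * cnj (b n))"

definition h2_fun :: "(nat \<Rightarrow> complex) \<Rightarrow> complex \<Rightarrow> complex" where
  "h2_fun a z = (\<Sum>n. a n * z ^ n)"

definition taylor_coeffs :: "(complex \<Rightarrow> complex) \<Rightarrow> nat \<Rightarrow> complex" where
  "taylor_coeffs g n = (deriv ^^ n) g 0 / of_nat (fact n)"

definition J_H2 :: "(nat \<Rightarrow> complex) \<Rightarrow> nat \<Rightarrow> complex" where
  "J_H2 a = (\<lambda>n. cnj (a n))"

definition psi_fn :: "complex \<Rightarrow> complex \<Rightarrow> complex" where
  "psi_fn \<alpha> z = complex_of_real (sqrt (1 - (cmod \<alpha>)\<^sup>2)) / (1 - cnj \<alpha> * z)"

definition theta_fn :: "complex \<Rightarrow> complex \<Rightarrow> complex" where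
  "theta_fn \<alpha> z = (cnj \<alpha> / \<alpha>) * ((\<alpha> - z) / (1 - cnj \<alpha> * z))"

definition W_op :: "complex \<Rightarrow> (nat \<Rightarrow> complex) \<Rightarrow> nat \<Rightarrow> complex" where
  "W_op \<alpha> a = taylor_coeffs (\<lambda>z. psi_fn \<alpha> z * h2_fun a (theta_fn \<alpha> z))"

definition C_op :: "complex \<Rightarrow> (nat \<Rightarrow> complex) \<Rightarrow> nat \<Rightarrow> complex" where
  "C_op \<alpha> = W_op \<alpha> \<circ> J_H2"

definition is_adjoint :: "((nat \<Rightarrow> complex) \<Rightarrow> nat \<Rightarrow> complex) \<Rightarrow> ((nat \<Rightarrow> complex) \<Rightarrow> nat \<Rightarrow> complex) \<Rightarrow> bool" where
  "is_adjoint T S \<longleftrightarrow> (\<forall>g\<in>H2. S g \<in> H2) \<and>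
     (\<forall>f\<in>H2. \<forall>g\<in>H2. h2_inner (T f) g = h2_inner f (S g))"

definition C_symmetric :: "((nat \<Rightarrow> complex) \<Rightarrow> nat \<Rightarrow> complex) \<Rightarrow> ((nat \<Rightarrow> complex) \<Rightarrow> nat \<Rightarrow> complex) \<Rightarrow> bool" where
  "C_symmetric C T \<longleftrightarrow> (\<exists>S. is_adjoint T S \<and> (\<forall>f\<in>H2. C (S (C f)) = T f))"

definition L_infty_circle :: "(complex \<Rightarrow> complex) \<Rightarrow> bool" where
  "L_infty_circle \<phi> \<longleftrightarrow> (\<lambda>t. \<phi> (cis t)) \<in> borel_measurable lborel \<and>
     (\<exists>M. AE t in lborel. t \<in> {0..2*pi} \<longrightarrow> cmod (\<phi> (cis t)) \<le> M)"

definition fourier_coeff :: "(complex \<Rightarrow> complex) \<Rightarrow> int \<Rightarrow> complex" where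
  "fourier_coeff \<phi> n = (LINT t:{0..2*pi}|lborel. \<phi> (cis t) * cis (- (of_int n * t))) / (2 * pi)"

text \<open>Toeplitz operator T_phi f = P(phi f), written in the basis z^n:
  the m-th coefficient of P(phi f) is sum_k phi_(m-k) f_k.\<close>
definition toeplitz :: "(complex \<Rightarrow> complex) \<Rightarrow> (nat \<Rightarrow> complex) \<Rightarrow> nat \<Rightarrow> complex" where
  "toeplitz \<phi> a = (\<lambda>m. \<Sum>k. fourier_coeff \<phi> (int m - int k) * a k)"

definition u_coeff :: "complex \<Rightarrow> nat \<Rightarrow> nat \<Rightarrow> complex" where
  "u_coeff \<alpha> i j = complex_of_real (sqrt (1 - (cmod \<alpha>)\<^sup>2)) *
     (\<Sum>m = 0..min i j. ((-1) ^ m / \<alpha> ^ m) * of_nat (i choose m) *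
        cnj \<alpha> ^ (i + j - m) * of_nat ((i + j - m) choose i))"

end

theory Submission
  imports Defs
begin

text \<open>The numbers \<open>u\<^sub>i\<^sub>,\<^sub>j\<close> are the Taylor coefficients of \<open>\<psi> \<theta>\<^sup>i\<close>, so in the basis \<open>z\<^sup>n\<close> the
  conjugation \<open>C\<close> acts on conjugated coefficient sequences by the symmetric matrix \<open>u\<close>.
  Since \<open>|\<theta>| = 1\<close> on the circle and \<open>\<theta>(\<alpha>) = 0\<close>, Parseval's identity shows that the rows of \<open>u\<close>
  are orthonormal, so \<open>u\<close> is a contraction of \<open>\<ell>\<^sup>2\<close>. For any adjoint \<open>S\<close> of \<open>T\<^sub>\<phi>\<close>, the
  coefficients of \<open>S g\<close> are \<open>\<langle>T\<^sub>\<phi> z\<^sup>i, g\<rangle>\<close>; hence \<open>(C S C z\<^sup>n)\<^sub>m\<close> is the right-hand side of the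
  stated identity while \<open>(T\<^sub>\<phi> z\<^sup>n)\<^sub>m = \<phi>\<^sub>m\<^sub>-\<^sub>n\<close>. This gives necessity. For sufficiency, the
  conjugate transposed Toeplitz matrix is an adjoint of \<open>T\<^sub>\<phi>\<close>, and the bounded linear maps
  \<open>C S C\<close> and \<open>T\<^sub>\<phi>\<close> agree on the basis, hence on \<open>H\<^sup>2\<close>.\<close>

section \<open>Absolutely convergent double series\<close>

lemma infsum_nat_eq_suminf:
  fixes f :: "nat \<Rightarrow> 'a::banach"
  assumes "summable (\<lambda>n. norm (f n))"
  shows "infsum f UNIV = suminf f"
  using norm_summable_imp_has_sum[OF assms, of "suminf f"] assms
  by (metis infsumI summable_norm_cancel summable_sums)

lemma infsum_infsum_eq_suminf_suminf:
  fixes g :: "nat \<Rightarrow> nat \<Rightarrow> 'a::banach"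
  assumes rows: "\<And>i. summable (\<lambda>j. norm (g i j))" and total: "summable (\<lambda>i. \<Sum>j. norm (g i j))"
  shows "infsum (\<lambda>i. infsum (\<lambda>j. g i j) UNIV) UNIV = (\<Sum>i. \<Sum>j. g i j)"
proof -
  have "summable (\<lambda>i. norm (\<Sum>j. g i j))"
    by (rule summable_comparison_test[OF _ total]) (use summable_norm[OF rows] in force)
  hence "infsum (\<lambda>i. \<Sum>j. g i j) UNIV = (\<Sum>i. \<Sum>j. g i j)"
    by (rule infsum_nat_eq_suminf)
  moreover have "(\<lambda>i. infsum (\<lambda>j. g i j) UNIV) = (\<lambda>i. \<Sum>j. g i j)"
    using infsum_nat_eq_suminf[OF rows] by simp
  ultimately show ?thesis by (simp only:)
qed

lemma suminf_swap_abs_summable: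
  fixes f :: "nat \<Rightarrow> nat \<Rightarrow> 'a::banach"
  assumes rows: "\<And>i. summable (\<lambda>j. norm (f i j))"
    and total: "summable (\<lambda>i. \<Sum>j. norm (f i j))"
  shows "(\<Sum>i. \<Sum>j. f i j) = (\<Sum>j. \<Sum>i. f i j)"
    and "summable (\<lambda>i. norm (f i j))"
    and "summable (\<lambda>j. \<Sum>i. norm (f i j))"
proof -
  have row_infsum: "infsum (\<lambda>j. norm (f i j)) UNIV = (\<Sum>j. norm (f i j))" for i
    using infsum_nat_eq_suminf[of "\<lambda>j. norm (f i j)"] rows by simp
  have abs: "(\<lambda>p. norm ((\<lambda>(i, j). f i j) p)) summable_on UNIV \<times> UNIV"
  proof (rule iffD2[OF Infinite_Sum.abs_summable_on_Sigma_iff], intro conjI ballI)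
    show "(\<lambda>j. norm ((\<lambda>(i, j). f i j) (i, j))) summable_on UNIV" for i
      using rows[of i] by (auto intro: norm_summable_imp_summable_on)
    have "(\<lambda>i. norm (\<Sum>j. norm (f i j))) summable_on UNIV"
      by (rule norm_summable_imp_summable_on) (use total in \<open>simp add: suminf_nonneg[OF rows]\<close>)
    thus "(\<lambda>i. norm (infsum (\<lambda>j. norm ((\<lambda>(i, j). f i j) (i, j))) UNIV)) summable_on UNIV"
      by (simp add: row_infsum)
  qed
  hence sum2: "(\<lambda>(i, j). f i j) summable_on UNIV \<times> UNIV"
    by (simp add: abs_summable_summable)
  have "((\<lambda>p. norm ((\<lambda>(i, j). f i j) p)) \<circ> prod.swap) summable_on UNIV \<times> UNIV"
    using summable_on_reindex[of prod.swap "UNIV \<times> UNIV" "\<lambda>p. norm ((\<lambda>(i, j). f i j) p)"] abs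
    by (simp add: product_swap)
  moreover have "(\<lambda>p. norm ((\<lambda>(i, j). f i j) p)) \<circ> prod.swap = (\<lambda>p. norm ((\<lambda>(j, i). f i j) p))"
    by auto
  ultimately have "(\<lambda>p. norm ((\<lambda>(j, i). f i j) p)) summable_on UNIV \<times> UNIV"
    by simp
  hence cols: "(\<forall>j\<in>UNIV. (\<lambda>i. norm ((\<lambda>(j, i). f i j) (j, i))) summable_on UNIV) \<and>
      (\<lambda>j. norm (infsum (\<lambda>i. norm ((\<lambda>(j, i). f i j) (j, i))) UNIV)) summable_on UNIV"
    by (rule iffD1[OF Infinite_Sum.abs_summable_on_Sigma_iff])
  show col: "summable (\<lambda>i. norm (f i j))" for j
    using cols summable_on_imp_summable by auto
  have col_infsum: "infsum (\<lambda>i. norm (f i j)) UNIV = (\<Sum>i. norm (f i j))" for j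
    using infsum_nat_eq_suminf[of "\<lambda>i. norm (f i j)"] col by simp
  have "summable (\<lambda>j. norm (\<Sum>i. norm (f i j)))"
    using cols by (simp add: col_infsum summable_on_imp_summable)
  thus total': "summable (\<lambda>j. \<Sum>i. norm (f i j))"
    by (simp add: suminf_nonneg[OF col])
  have "(\<Sum>i. \<Sum>j. f i j) = infsum (\<lambda>i. infsum (\<lambda>j. f i j) UNIV) UNIV"
    using infsum_infsum_eq_suminf_suminf[OF rows total] ..
  also have "\<dots> = infsum (\<lambda>j. infsum (\<lambda>i. f i j) UNIV) UNIV"
    by (rule infsum_swap_banach[OF sum2])
  also have "\<dots> = (\<Sum>j. \<Sum>i. f i j)"
    using infsum_infsum_eq_suminf_suminf[of "\<lambda>j i. f i j", OF col total'] .
  finally show "(\<Sum>i. \<Sum>j. f i j) = (\<Sum>j. \<Sum>i. f i j)" .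
qed

lemma suminf_ge_term:
  fixes f :: "nat \<Rightarrow> real"
  assumes "summable f" "\<And>n. f n \<ge> 0"
  shows "f n \<le> suminf f"
  using sum_le_suminf[of f "{n}"] assms by simp

lemma suminf_cnj:
  assumes "summable f"
  shows "cnj (suminf f) = (\<Sum>n. cnj (f n))"
proof -
  have "(\<lambda>n. cnj (f n)) sums cnj (suminf f)"
    using summable_sums[OF assms] by (simp only: sums_cnj)
  thus ?thesis by (simp add: sums_iff)
qed

lemma summable_mult_cnj_abs_summable:
  fixes a b :: "nat \<Rightarrow> complex"
  assumes "summable (\<lambda>j. norm (a j))" "summable (\<lambda>j. norm (b j))"
  shows "summable (\<lambda>j. norm (a j * cnj (b j)))"
  by (rule summable_comparison_test[OF _ summable_mult2[OF assms(1), of "\<Sum>j. norm (b j)"]])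
    (auto simp: norm_mult intro!: mult_left_mono suminf_ge_term[OF assms(2)])

section \<open>The coefficients \<open>u\<^sub>i\<^sub>,\<^sub>j\<close> as Taylor coefficients of \<open>\<psi> \<theta>\<^sup>i\<close>\<close>

lemma negative_binomial_sums:
  fixes w :: complex
  assumes "norm w < 1"
  shows "(\<lambda>l. of_nat ((i + l) choose i) * w ^ l) sums (1 / (1 - w) ^ Suc i)"
  using assms
proof (induct i arbitrary: w)
  case (0 w)
  show ?case using geometric_sums[of w] "0.prems" by simp
next
  case (Suc i w)
  have a: "summable (\<lambda>l. norm (of_nat ((i + l) choose i) * w ^ l))"
  proof -
    have "(\<lambda>l. of_nat ((i + l) choose i) * (complex_of_real (norm w)) ^ l) sums
        (1 / (1 - of_real (norm w)) ^ Suc i)"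
      by (rule Suc.hyps) (use Suc.prems in simp)
    hence "summable (\<lambda>l. complex_of_real (of_nat ((i + l) choose i) * norm w ^ l))"
      by (simp add: sums_iff)
    thus ?thesis by (simp only: summable_complex_of_real) (simp add: norm_mult norm_power)
  qed
  have b: "summable (\<lambda>l. norm (w ^ l))"
    using Suc.prems by (simp add: norm_power summable_geometric)
  have "(\<lambda>l. \<Sum>k\<le>l. of_nat ((i + k) choose i) * w ^ k * w ^ (l - k)) sums
        ((\<Sum>l. of_nat ((i + l) choose i) * w ^ l) * (\<Sum>l. w ^ l))"
    by (rule Cauchy_product_sums[OF a b])
  moreover have "(\<Sum>k\<le>l. of_nat ((i + k) choose i) * w ^ k * w ^ (l - k)) =
      of_nat ((Suc i + l) choose Suc i) * w ^ l" for l
  proof -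
    have "(\<Sum>k\<le>l. of_nat ((i + k) choose i) * w ^ k * w ^ (l - k)) =
        (\<Sum>k\<le>l. of_nat ((i + k) choose i) * w ^ l)"
      by (intro sum.cong refl) (simp add: mult.assoc power_add[symmetric])
    also have "\<dots> = of_nat (\<Sum>k\<le>l. (i + k) choose i) * w ^ l"
      by (simp add: sum_distrib_right)
    finally show ?thesis by (simp add: choose_rising_sum(1))
  qed
  moreover have "(\<Sum>l. of_nat ((i + l) choose i) * w ^ l) = 1 / (1 - w) ^ Suc i"
    using Suc.hyps[OF Suc.prems] sums_unique by metis
  moreover have "(\<Sum>l. w ^ l) = 1 / (1 - w)"
    using sums_unique[OF geometric_sums[OF Suc.prems]] by simp
  ultimately show ?case by (simp add: field_simps)
qed

lemma negative_binomial_abs_summable: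
  fixes w :: complex
  assumes "norm w < 1"
  shows "summable (\<lambda>l. norm (of_nat ((i + l) choose i) * w ^ l))"
proof -
  have "(\<lambda>l. of_nat ((i + l) choose i) * (complex_of_real (norm w)) ^ l) sums
      (1 / (1 - of_real (norm w)) ^ Suc i)"
    by (rule negative_binomial_sums) (use assms in simp)
  hence "summable (\<lambda>l. complex_of_real (of_nat ((i + l) choose i) * norm w ^ l))"
    by (simp add: sums_iff)
  thus ?thesis by (simp only: summable_complex_of_real) (simp add: norm_mult norm_power)
qed

text \<open>Taylor coefficients of \<open>(\<beta> + \<gamma> z)\<^sup>i / (1 - \<delta> z)\<^sup>i\<^sup>+\<^sup>1\<close>.\<close>

definition ratio_power_coeff :: "complex \<Rightarrow> complex \<Rightarrow> complex \<Rightarrow> nat \<Rightarrow> nat \<Rightarrow> complex" where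
  "ratio_power_coeff \<beta> \<gamma> \<delta> i j = (\<Sum>m = 0..min i j. of_nat (i choose m) * \<beta> ^ (i - m) * \<gamma> ^ m *
      of_nat ((i + j - m) choose i) * \<delta> ^ (j - m))"

lemma ratio_power_coeff_sums:
  fixes \<beta> \<gamma> \<delta> z :: complex
  assumes "norm (\<delta> * z) < 1"
  shows "(\<lambda>j. ratio_power_coeff \<beta> \<gamma> \<delta> i j * z ^ j) sums ((\<beta> + \<gamma> * z) ^ i / (1 - \<delta> * z) ^ Suc i)"
proof -
  define a where "a m = (if m \<le> i then of_nat (i choose m) * (\<gamma> * z) ^ m * \<beta> ^ (i - m) else 0)" for m
  define b where "b l = of_nat ((i + l) choose i) * (\<delta> * z) ^ l" for l
  have a_sums: "a sums (\<Sum>m\<le>i. a m)"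
    by (rule sums_finite) (auto simp: a_def)
  have a_abs: "summable (\<lambda>m. norm (a m))"
    by (rule sums_summable[OF sums_finite[of "{..i}"]]) (auto simp: a_def)
  have "(\<Sum>m\<le>i. a m) = (\<gamma> * z + \<beta>) ^ i"
    by (simp add: a_def binomial_ring)
  hence sum_a: "suminf a = (\<beta> + \<gamma> * z) ^ i"
    using a_sums sums_unique by (metis add.commute)
  have b_sums: "b sums (1 / (1 - \<delta> * z) ^ Suc i)"
    unfolding b_def by (rule negative_binomial_sums[OF assms])
  have b_abs: "summable (\<lambda>l. norm (b l))"
    unfolding b_def by (rule negative_binomial_abs_summable[OF assms])
  have "(\<lambda>j. \<Sum>m\<le>j. a m * b (j - m)) sums (suminf a * suminf b)"
    by (rule Cauchy_product_sums[OF a_abs b_abs])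
  moreover have "(\<Sum>m\<le>j. a m * b (j - m)) = ratio_power_coeff \<beta> \<gamma> \<delta> i j * z ^ j" for j
  proof -
    have "(\<Sum>m\<le>j. a m * b (j - m)) = (\<Sum>m = 0..min i j. a m * b (j - m))"
      by (rule sum.mono_neutral_cong_right) (auto simp: a_def)
    also have "\<dots> = (\<Sum>m = 0..min i j. of_nat (i choose m) * \<beta> ^ (i - m) * \<gamma> ^ m *
      of_nat ((i + j - m) choose i) * \<delta> ^ (j - m) * z ^ j)"
    proof (intro sum.cong refl)
      fix m assume "m \<in> {0..min i j}"
      hence m: "m \<le> i" "m \<le> j" by auto
      have zz: "z ^ m * z ^ (j - m) = z ^ j" using m by (simp add: power_add[symmetric])
      have ii: "i + (j - m) = i + j - m" using m by simp
      show "a m * b (j - m) = of_nat (i choose m) * \<beta> ^ (i - m) * \<gamma> ^ m *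
        of_nat ((i + j - m) choose i) * \<delta> ^ (j - m) * z ^ j"
        using m unfolding a_def b_def ii by (simp add: power_mult_distrib zz[symmetric] algebra_simps)
    qed
    finally show ?thesis by (simp add: ratio_power_coeff_def sum_distrib_right)
  qed
  ultimately show ?thesis using sum_a sums_unique[OF b_sums] by (simp add: divide_inverse)
qed

abbreviation psi_const :: "complex \<Rightarrow> real" where
  "psi_const \<alpha> \<equiv> sqrt (1 - (cmod \<alpha>)\<^sup>2)"

lemma u_coeff_eq_ratio_power_coeff:
  assumes "\<alpha> \<noteq> 0"
  shows "u_coeff \<alpha> i j =
    of_real (psi_const \<alpha>) * (cnj \<alpha> / \<alpha>) ^ i * ratio_power_coeff \<alpha> (-1) (cnj \<alpha>) i j"
proof -
  have "((-1) ^ m / \<alpha> ^ m) * of_nat (i choose m) * cnj \<alpha> ^ (i + j - m) * of_nat ((i + j - m) choose i)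
     = (cnj \<alpha> / \<alpha>) ^ i * (of_nat (i choose m) * \<alpha> ^ (i - m) * (-1) ^ m *
         of_nat ((i + j - m) choose i) * cnj \<alpha> ^ (j - m))"
    if "m \<in> {0..min i j}" for m
  proof -
    from that have m: "m \<le> i" "m \<le> j" by auto
    have e1: "cnj \<alpha> ^ (i + j - m) = cnj \<alpha> ^ i * cnj \<alpha> ^ (j - m)"
      using m by (simp add: power_add[symmetric])
    have e2: "\<alpha> ^ i = \<alpha> ^ m * \<alpha> ^ (i - m)"
      using m by (simp add: power_add[symmetric])
    show ?thesis using assms unfolding e1 power_divide e2 by (simp add: field_simps)
  qed
  thus ?thesis unfolding u_coeff_def ratio_power_coeff_def
    by (simp add: sum_distrib_left mult.assoc)
qed

lemma u_coeff_sums: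
  assumes "\<alpha> \<noteq> 0" "norm (cnj \<alpha> * z) < 1"
  shows "(\<lambda>j. u_coeff \<alpha> i j * z ^ j) sums (psi_fn \<alpha> z * theta_fn \<alpha> z ^ i)"
proof -
  define c where "c = of_real (psi_const \<alpha>) * (cnj \<alpha> / \<alpha>) ^ i"
  have "(\<lambda>j. c * (ratio_power_coeff \<alpha> (-1) (cnj \<alpha>) i j * z ^ j)) sums
      (c * ((\<alpha> + (-1) * z) ^ i / (1 - cnj \<alpha> * z) ^ Suc i))"
    by (rule sums_mult[OF ratio_power_coeff_sums[OF assms(2)]])
  moreover have "1 - cnj \<alpha> * z \<noteq> 0"
    using assms(2) by auto
  hence "psi_fn \<alpha> z * theta_fn \<alpha> z ^ i = c * ((\<alpha> + (-1) * z) ^ i / (1 - cnj \<alpha> * z) ^ Suc i)"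
    unfolding psi_fn_def theta_fn_def c_def power_mult_distrib power_divide
    by (simp add: field_simps)
  ultimately show ?thesis
    unfolding u_coeff_eq_ratio_power_coeff[OF assms(1)] c_def by (simp add: mult.assoc)
qed

lemma choose_mult_choose_swap:
  assumes "m \<le> i" "m \<le> j"
  shows "(i choose m) * ((i + j - m) choose i) = (j choose m) * ((i + j - m) choose j)"
proof -
  have both: "(k choose m) * ((k + l - m) choose k) * (fact m * fact (k - m) * fact (l - m)) =
      (fact (k + l - m) :: nat)" if "m \<le> k" "m \<le> l" for k l
  proof -
    have "fact m * fact (k - m) * (k choose m) = (fact k :: nat)"
      using binomial_fact_lemma[OF that(1)] .
    moreover have "fact k * fact (k + l - m - k) * ((k + l - m) choose k) = (fact (k + l - m) :: nat)"
      using binomial_fact_lemma[of k "k + l - m"] that by simp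
    moreover have "k + l - m - k = l - m" using that by simp
    ultimately show ?thesis by (metis mult.commute mult.left_commute)
  qed
  have "(i choose m) * ((i + j - m) choose i) * (fact m * fact (i - m) * fact (j - m)) =
      (j choose m) * ((i + j - m) choose j) * (fact m * fact (i - m) * fact (j - m))"
    using both[OF assms] both[OF assms(2,1)] by (simp add: add.commute mult_ac)
  thus ?thesis by simp
qed

lemma u_coeff_sym: "u_coeff \<alpha> i j = u_coeff \<alpha> j i"
proof -
  have "((-1) ^ m / \<alpha> ^ m) * of_nat (i choose m) * cnj \<alpha> ^ (i + j - m) * of_nat ((i + j - m) choose i) =
        ((-1) ^ m / \<alpha> ^ m) * of_nat (j choose m) * cnj \<alpha> ^ (j + i - m) * of_nat ((j + i - m) choose j)"
    if "m \<in> {0..min i j}" for m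
  proof -
    from that have m: "m \<le> i" "m \<le> j" by auto
    have "of_nat (i choose m) * of_nat ((i + j - m) choose i) =
        (of_nat (j choose m) * of_nat ((i + j - m) choose j) :: complex)"
      using choose_mult_choose_swap[OF m] by (metis of_nat_mult)
    thus ?thesis by (simp add: add.commute mult_ac)
  qed
  hence "(\<Sum>m = 0..min i j. ((-1) ^ m / \<alpha> ^ m) * of_nat (i choose m) * cnj \<alpha> ^ (i + j - m) *
        of_nat ((i + j - m) choose i)) =
      (\<Sum>m = 0..min j i. ((-1) ^ m / \<alpha> ^ m) * of_nat (j choose m) * cnj \<alpha> ^ (j + i - m) *
        of_nat ((j + i - m) choose j))"
    unfolding min.commute[of j i] by (rule sum.cong[OF refl])
  thus ?thesis unfolding u_coeff_def by (simp only:)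
qed

text \<open>The real series majorizing \<open>u\<close>: the coefficients of \<open>(a + r)\<^sup>i / (1 - a r)\<^sup>i\<^sup>+\<^sup>1\<close>.\<close>

definition u_majorant :: "real \<Rightarrow> nat \<Rightarrow> nat \<Rightarrow> real" where
  "u_majorant a i j =
    (\<Sum>m = 0..min i j. real (i choose m) * a ^ (i - m) * real ((i + j - m) choose i) * a ^ (j - m))"

lemma u_majorant_sums:
  assumes "0 \<le> r" "0 \<le> a" "a * r < 1"
  shows "(\<lambda>j. u_majorant a i j * r ^ j) sums ((a + r) ^ i / (1 - a * r) ^ Suc i)"
proof -
  have "(\<lambda>j. ratio_power_coeff (of_real a) 1 (of_real a) i j * (of_real r) ^ j) sums
      ((of_real a + 1 * of_real r) ^ i / (1 - of_real a * of_real r) ^ Suc i)"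
    by (rule ratio_power_coeff_sums) (use assms in \<open>simp add: norm_mult\<close>)
  moreover have "ratio_power_coeff (of_real a) 1 (of_real a) i j = of_real (u_majorant a i j)" for j
    unfolding ratio_power_coeff_def u_majorant_def by simp
  ultimately have "(\<lambda>j. complex_of_real (u_majorant a i j * r ^ j)) sums
      of_real ((a + r) ^ i / (1 - a * r) ^ Suc i)"
    by simp
  thus ?thesis by (simp only: sums_of_real_iff)
qed

lemma norm_u_coeff_le:
  assumes "\<alpha> \<noteq> 0" "norm \<alpha> < 1"
  shows "norm (u_coeff \<alpha> i j) \<le> psi_const \<alpha> * u_majorant (norm \<alpha>) i j"
proof -
  have "norm (ratio_power_coeff \<alpha> (-1) (cnj \<alpha>) i j) \<le> u_majorant (norm \<alpha>) i j"
    unfolding ratio_power_coeff_def u_majorant_def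
    by (rule order_trans[OF norm_sum]) (simp add: norm_mult norm_power)
  moreover have "psi_const \<alpha> \<ge> 0" using assms(2) by (simp add: abs_square_le_1 power_le_one)
  ultimately show ?thesis unfolding u_coeff_eq_ratio_power_coeff[OF assms(1)] using assms
    by (simp add: norm_mult norm_power norm_divide mult_left_mono)
qed

lemma u_coeff_row_weighted:
  assumes "\<alpha> \<noteq> 0" "norm \<alpha> < 1" "0 \<le> r" "norm \<alpha> * r < 1"
  shows "summable (\<lambda>j. norm (u_coeff \<alpha> i j) * r ^ j)"
    and "(\<Sum>j. norm (u_coeff \<alpha> i j) * r ^ j) \<le>
      psi_const \<alpha> * ((norm \<alpha> + r) ^ i / (1 - norm \<alpha> * r) ^ Suc i)"
proof -
  have maj: "(\<lambda>j. psi_const \<alpha> * (u_majorant (norm \<alpha>) i j * r ^ j)) sums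
      (psi_const \<alpha> * ((norm \<alpha> + r) ^ i / (1 - norm \<alpha> * r) ^ Suc i))"
    by (rule sums_mult[OF u_majorant_sums]) (use assms in auto)
  have le: "norm (u_coeff \<alpha> i j) * r ^ j \<le> psi_const \<alpha> * (u_majorant (norm \<alpha>) i j * r ^ j)" for j
    using norm_u_coeff_le[OF assms(1,2), of i j] assms(3)
    by (simp add: mult_right_mono mult.assoc[symmetric])
  show sm: "summable (\<lambda>j. norm (u_coeff \<alpha> i j) * r ^ j)"
    by (rule summable_comparison_test[OF _ sums_summable[OF maj]]) (use le assms(3) in auto)
  show "(\<Sum>j. norm (u_coeff \<alpha> i j) * r ^ j) \<le>
      psi_const \<alpha> * ((norm \<alpha> + r) ^ i / (1 - norm \<alpha> * r) ^ Suc i)"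
    using suminf_le[OF le sm sums_summable[OF maj]] sums_unique[OF maj] by simp
qed

lemma u_coeff_row_abs_summable:
  assumes "norm \<alpha> < 1" "\<alpha> \<noteq> 0"
  shows "summable (\<lambda>j. norm (u_coeff \<alpha> i j))"
  using u_coeff_row_weighted(1)[OF assms(2,1), of 1 i] assms by simp

lemma u_coeff_col_abs_summable:
  assumes "norm \<alpha> < 1" "\<alpha> \<noteq> 0"
  shows "summable (\<lambda>i. norm (u_coeff \<alpha> i j))"
  using u_coeff_row_abs_summable[OF assms, of j] by (simp add: u_coeff_sym[of \<alpha> _ j])

section \<open>The weighted composition operator in the basis \<open>z\<^sup>n\<close>\<close>

text \<open>On the disc of radius \<open>theta_radius \<alpha>\<close> the values of \<open>\<theta>\<close> stay in the disc of radius
  \<open>theta_bound \<alpha> < 1\<close>, which makes the double series for \<open>\<psi> \<cdot> (h \<circ> \<theta>)\<close> converge absolutely.\<close>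

definition theta_radius :: "complex \<Rightarrow> real" where
  "theta_radius \<alpha> = (1 - norm \<alpha>) / 4"

definition theta_bound :: "complex \<Rightarrow> real" where
  "theta_bound \<alpha> = (norm \<alpha> + theta_radius \<alpha>) / (1 - norm \<alpha> * theta_radius \<alpha>)"

lemma theta_radius_props:
  assumes "norm \<alpha> < 1"
  shows "theta_radius \<alpha> > 0" "1 - norm \<alpha> * theta_radius \<alpha> > 0"
    and "0 \<le> theta_bound \<alpha>" "theta_bound \<alpha> < 1"
proof -
  show pos: "theta_radius \<alpha> > 0" using assms by (simp add: theta_radius_def)
  have "norm \<alpha> * theta_radius \<alpha> \<le> 1 * theta_radius \<alpha>"
    using assms pos by (intro mult_right_mono) auto
  moreover have "1 - norm \<alpha> < 4" using norm_ge_zero[of \<alpha>] by linarith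
  hence "theta_radius \<alpha> < 1" by (simp add: theta_radius_def)
  ultimately show den: "1 - norm \<alpha> * theta_radius \<alpha> > 0" by auto
  show "0 \<le> theta_bound \<alpha>" using den pos by (simp add: theta_bound_def)
  have "theta_radius \<alpha> * (1 + norm \<alpha>) = (1 - norm \<alpha>) * ((1 + norm \<alpha>) / 4)"
    by (simp add: theta_radius_def)
  also have "\<dots> < (1 - norm \<alpha>) * 1"
    using assms by (intro mult_strict_left_mono) auto
  finally have "norm \<alpha> + theta_radius \<alpha> < 1 - norm \<alpha> * theta_radius \<alpha>"
    by (simp add: algebra_simps)
  thus "theta_bound \<alpha> < 1" using den by (simp add: theta_bound_def)
qed

lemma norm_theta_le_theta_bound:
  assumes "norm \<alpha> < 1" "\<alpha> \<noteq> 0" "norm z \<le> theta_radius \<alpha>"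
  shows "norm (theta_fn \<alpha> z) \<le> theta_bound \<alpha>"
proof -
  note R = theta_radius_props[OF assms(1)]
  have "norm (cnj \<alpha> * z) \<le> norm \<alpha> * theta_radius \<alpha>"
    using assms(3) by (simp add: norm_mult mult_left_mono)
  hence den: "norm (1 - cnj \<alpha> * z) \<ge> 1 - norm \<alpha> * theta_radius \<alpha>"
    by (smt (verit) norm_triangle_ineq2 norm_one)
  have num: "norm (\<alpha> - z) \<le> norm \<alpha> + theta_radius \<alpha>"
    using assms(3) norm_triangle_ineq4[of \<alpha> z] by simp
  have "norm (theta_fn \<alpha> z) = norm (\<alpha> - z) / norm (1 - cnj \<alpha> * z)"
    using assms(2) by (simp add: theta_fn_def norm_mult norm_divide)
  also have "\<dots> \<le> (norm \<alpha> + theta_radius \<alpha>) / (1 - norm \<alpha> * theta_radius \<alpha>)"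
    by (rule frac_le) (use num den R in auto)
  finally show ?thesis by (simp add: theta_bound_def)
qed

lemma u_coeff_row_power_series_bound:
  assumes a: "norm \<alpha> < 1" "\<alpha> \<noteq> 0" and z: "norm z \<le> theta_radius \<alpha>"
  shows "summable (\<lambda>j. norm (u_coeff \<alpha> i j * z ^ j))"
    and "(\<Sum>j. norm (u_coeff \<alpha> i j * z ^ j)) \<le>
      psi_const \<alpha> / (1 - norm \<alpha> * theta_radius \<alpha>) * theta_bound \<alpha> ^ i"
proof -
  define r where "r = theta_radius \<alpha>"
  note R = theta_radius_props[OF a(1), folded r_def]
  have le: "norm (u_coeff \<alpha> i j * z ^ j) \<le> norm (u_coeff \<alpha> i j) * r ^ j" for j
    using z by (auto simp: norm_mult norm_power r_def intro!: mult_left_mono power_mono)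
  have r_ok: "0 \<le> r" "norm \<alpha> * r < 1" using R by auto
  note W = u_coeff_row_weighted[OF a(2,1) r_ok, of i]
  show sm: "summable (\<lambda>j. norm (u_coeff \<alpha> i j * z ^ j))"
    by (rule summable_comparison_test[OF _ W(1)]) (use le in auto)
  have "(\<Sum>j. norm (u_coeff \<alpha> i j * z ^ j)) \<le> (\<Sum>j. norm (u_coeff \<alpha> i j) * r ^ j)"
    by (rule suminf_le[OF le sm W(1)])
  also have "\<dots> \<le> psi_const \<alpha> * ((norm \<alpha> + r) ^ i / (1 - norm \<alpha> * r) ^ Suc i)"
    by (rule W(2))
  also have "\<dots> = psi_const \<alpha> / (1 - norm \<alpha> * r) * theta_bound \<alpha> ^ i"
    by (simp add: theta_bound_def r_def power_divide field_simps)
  finally show "(\<Sum>j. norm (u_coeff \<alpha> i j * z ^ j)) \<le>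
      psi_const \<alpha> / (1 - norm \<alpha> * theta_radius \<alpha>) * theta_bound \<alpha> ^ i"
    by (simp add: r_def)
qed

lemma u_coeff_double_series_abs_summable:
  fixes h :: "nat \<Rightarrow> complex"
  assumes a: "norm \<alpha> < 1" "\<alpha> \<noteq> 0" and hB: "\<And>i. norm (h i) \<le> B"
    and z: "norm z \<le> theta_radius \<alpha>"
  shows "summable (\<lambda>j. norm (h i * (u_coeff \<alpha> i j * z ^ j)))"
    and "summable (\<lambda>i. \<Sum>j. norm (h i * (u_coeff \<alpha> i j * z ^ j)))"
proof -
  note U = u_coeff_row_power_series_bound[OF a z]
  define K where "K = B * (psi_const \<alpha> / (1 - norm \<alpha> * theta_radius \<alpha>))"
  have B0: "B \<ge> 0" using hB[of 0] norm_ge_zero[of "h 0"] by linarith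
  have le: "norm (h i * (u_coeff \<alpha> i j * z ^ j)) \<le> B * norm (u_coeff \<alpha> i j * z ^ j)" for i j
    unfolding norm_mult[of "h i"] using B0 by (intro mult_right_mono hB) auto
  show rows: "summable (\<lambda>j. norm (h i * (u_coeff \<alpha> i j * z ^ j)))" for i
    by (rule summable_comparison_test[OF _ summable_mult[OF U(1), of B]]) (use le in auto)
  have row_le: "(\<Sum>j. norm (h i * (u_coeff \<alpha> i j * z ^ j))) \<le> K * theta_bound \<alpha> ^ i" for i
  proof -
    have "(\<Sum>j. norm (h i * (u_coeff \<alpha> i j * z ^ j))) \<le> (\<Sum>j. B * norm (u_coeff \<alpha> i j * z ^ j))"
      by (rule suminf_le[OF le rows summable_mult[OF U(1)]])
    also have "\<dots> = B * (\<Sum>j. norm (u_coeff \<alpha> i j * z ^ j))"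
      by (rule suminf_mult[OF U(1)])
    also have "\<dots> \<le> B * (psi_const \<alpha> / (1 - norm \<alpha> * theta_radius \<alpha>) * theta_bound \<alpha> ^ i)"
      by (rule mult_left_mono[OF U(2) B0])
    finally show ?thesis by (simp add: K_def mult.assoc)
  qed
  have "summable (\<lambda>i. K * theta_bound \<alpha> ^ i)"
    using theta_radius_props[OF a(1)] by (intro summable_mult summable_geometric) auto
  thus "summable (\<lambda>i. \<Sum>j. norm (h i * (u_coeff \<alpha> i j * z ^ j)))"
    by (rule summable_comparison_test[rotated]) (use row_le suminf_nonneg[OF rows] in auto)
qed

lemma psi_mult_comp_theta_series:
  fixes h :: "nat \<Rightarrow> complex"
  assumes a: "norm \<alpha> < 1" "\<alpha> \<noteq> 0" and hB: "\<And>i. norm (h i) \<le> B"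
    and z: "norm z \<le> theta_radius \<alpha>"
  shows "(\<Sum>j. (\<Sum>i. h i * u_coeff \<alpha> i j) * z ^ j) = psi_fn \<alpha> z * h2_fun h (theta_fn \<alpha> z)"
    and "summable (\<lambda>j. norm ((\<Sum>i. h i * u_coeff \<alpha> i j) * z ^ j))"
proof -
  note R = theta_radius_props[OF a(1)]
  define f where "f i j = h i * (u_coeff \<alpha> i j * z ^ j)" for i j
  note D = u_coeff_double_series_abs_summable[OF a hB z]
  have rows: "summable (\<lambda>j. norm (f i j))" for i using D(1) by (simp add: f_def)
  have total: "summable (\<lambda>i. \<Sum>j. norm (f i j))" using D(2) by (simp add: f_def)
  note F = suminf_swap_abs_summable[OF rows total]
  have B0: "B \<ge> 0" using hB[of 0] norm_ge_zero[of "h 0"] by linarith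
  have h_theta: "summable (\<lambda>i. norm (h i * theta_fn \<alpha> z ^ i))"
    by (rule summable_comparison_test[OF _ summable_mult[OF summable_geometric[of "theta_bound \<alpha>"], of B]])
      (use R norm_theta_le_theta_bound[OF a z] in
        \<open>auto simp: norm_mult norm_power B0 intro!: mult_mono hB power_mono\<close>)
  have az: "norm (cnj \<alpha> * z) < 1"
    using R z a(1) by (simp add: norm_mult) (smt (verit) mult_left_mono norm_ge_zero)
  have col: "(\<Sum>i. f i j) = (\<Sum>i. h i * u_coeff \<alpha> i j) * z ^ j" for j
  proof -
    have "summable (\<lambda>i. h i * u_coeff \<alpha> i j)"
      by (rule summable_norm_cancel, rule summable_comparison_test[OF _
            summable_mult[OF u_coeff_col_abs_summable[OF a, of j], of B]])
        (auto simp: norm_mult intro!: mult_right_mono hB)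
    thus ?thesis unfolding f_def using suminf_mult2[of "\<lambda>i. h i * u_coeff \<alpha> i j" "z ^ j"]
      by (simp add: mult.assoc)
  qed
  have row: "(\<Sum>j. f i j) = psi_fn \<alpha> z * (h i * theta_fn \<alpha> z ^ i)" for i
    unfolding f_def using suminf_mult[OF sums_summable[OF u_coeff_sums[OF a(2) az, of i]], of "h i"]
      sums_unique[OF u_coeff_sums[OF a(2) az, of i]] by (simp add: mult_ac)
  have "psi_fn \<alpha> z * h2_fun h (theta_fn \<alpha> z) = (\<Sum>i. psi_fn \<alpha> z * (h i * theta_fn \<alpha> z ^ i))"
    unfolding h2_fun_def by (rule suminf_mult[symmetric, OF summable_norm_cancel[OF h_theta]])
  also have "\<dots> = (\<Sum>i. \<Sum>j. f i j)" by (simp add: row)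
  also have "\<dots> = (\<Sum>j. \<Sum>i. f i j)" by (rule F(1))
  finally show "(\<Sum>j. (\<Sum>i. h i * u_coeff \<alpha> i j) * z ^ j) = psi_fn \<alpha> z * h2_fun h (theta_fn \<alpha> z)"
    by (simp add: col)
  show "summable (\<lambda>j. norm ((\<Sum>i. h i * u_coeff \<alpha> i j) * z ^ j))"
    by (rule summable_comparison_test[OF _ F(3)])
      (use summable_norm[OF F(2)] col in \<open>auto simp del: norm_mult\<close>)
qed

lemma W_op_eq_u_coeff_sum:
  fixes h :: "nat \<Rightarrow> complex"
  assumes a: "norm \<alpha> < 1" "\<alpha> \<noteq> 0" and hB: "\<And>i. norm (h i) \<le> B"
  shows "W_op \<alpha> h = (\<lambda>j. \<Sum>i. h i * u_coeff \<alpha> i j)"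
proof
  fix n
  define F where "F = Abs_fps (\<lambda>j. \<Sum>i. h i * u_coeff \<alpha> i j)"
  define g where "g = (\<lambda>z. psi_fn \<alpha> z * h2_fun h (theta_fn \<alpha> z))"
  define \<rho> where "\<rho> = theta_radius \<alpha>"
  have \<rho>: "\<rho> > 0" using theta_radius_props[OF a(1)] by (simp add: \<rho>_def)
  have "g has_fps_expansion F"
    unfolding has_fps_expansion_def
  proof
    have "summable (\<lambda>j. norm ((\<Sum>i. h i * u_coeff \<alpha> i j) * (complex_of_real \<rho>) ^ j))"
      by (rule psi_mult_comp_theta_series(2)[OF a hB]) (use \<rho> in \<open>simp add: \<rho>_def\<close>)
    hence "conv_radius (fps_nth F) \<ge> norm (complex_of_real \<rho>)"
      unfolding F_def by (intro conv_radius_geI) (simp add: summable_norm_cancel)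
    thus "0 < fps_conv_radius F"
      using \<rho> unfolding fps_conv_radius_def
      by (smt (verit) ereal_less(2) le_less_trans norm_of_real order_less_le_trans abs_of_pos
          less_ereal.simps(1))
    have "eventually (\<lambda>z. z \<in> ball 0 \<rho>) (nhds 0)"
      using \<rho> by (intro eventually_nhds_in_open) auto
    thus "\<forall>\<^sub>F z in nhds 0. eval_fps F z = g z"
    proof eventually_elim
      case (elim z)
      hence "norm z \<le> theta_radius \<alpha>" by (simp add: \<rho>_def)
      thus "eval_fps F z = g z"
        unfolding eval_fps_def F_def g_def using psi_mult_comp_theta_series(1)[OF a hB] by simp
    qed
  qed
  hence "fps_nth F n = (deriv ^^ n) g 0 / fact n" by (rule fps_nth_fps_expansion)
  thus "W_op \<alpha> h n = (\<Sum>i. h i * u_coeff \<alpha> i n)"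
    unfolding W_op_def taylor_coeffs_def g_def F_def by simp
qed

section \<open>Parseval's identity and orthonormality of the rows of \<open>u\<close>\<close>

lemma integral_cis_int:
  fixes n :: int
  shows "(LINT t:{0..2*pi}|lborel. cis (of_int n * t)) = (if n = 0 then 2 * pi else 0)"
proof (cases "n = 0")
  case True
  thus ?thesis by (simp add: set_integral_const scaleR_conv_of_real)
next
  case False
  define c where "c = real_of_int n"
  have c0: "c \<noteq> 0" using False by (simp add: c_def)
  have "((\<lambda>t. cis (c * t) / (\<i> * of_real c)) has_vector_derivative cis (c * t))
      (at t within {0..2*pi})" for t
  proof -
    have "((\<lambda>t. cis (c * t)) has_derivative (\<lambda>h. (c * h) *\<^sub>R (\<i> * cis (c * t))))
        (at t within {0..2*pi})"
      by (rule has_derivative_cis) (auto intro!: derivative_eq_intros)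
    hence "((\<lambda>t. cis (c * t) / (\<i> * of_real c)) has_derivative
        (\<lambda>h. ((c * h) *\<^sub>R (\<i> * cis (c * t))) / (\<i> * of_real c))) (at t within {0..2*pi})"
      by (intro derivative_eq_intros) (use c0 in auto)
    moreover have "(\<lambda>h. ((c * h) *\<^sub>R (\<i> * cis (c * t))) / (\<i> * of_real c)) = (\<lambda>h. h *\<^sub>R cis (c * t))"
      using c0 by (auto simp: scaleR_conv_of_real field_simps)
    ultimately show ?thesis unfolding has_vector_derivative_def by simp
  qed
  hence "((\<lambda>t. cis (c * t)) has_integral
      (cis (c * (2 * pi)) / (\<i> * of_real c) - cis (c * 0) / (\<i> * of_real c))) {0..2*pi}"
    by (intro fundamental_theorem_of_calculus) auto
  moreover have "cis (c * (2 * pi)) = 1"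
    using cis_multiple_2pi[of "of_int n"] by (simp add: c_def mult_ac)
  ultimately have "((\<lambda>t. cis (c * t)) has_integral 0) {0..2*pi}" by simp
  moreover have "set_integrable lborel {0..2*pi} (\<lambda>t. cis (of_int n * t))"
    by (rule borel_integrable_atLeastAtMost') (intro continuous_intros)
  ultimately show ?thesis
    using False by (simp add: set_borel_integral_eq_integral(2) c_def integral_unique)
qed

lemma integral_cis_mult_cnj_cis:
  fixes j k :: nat
  shows "(LINT t:{0..2*pi}|lborel. cis (real j * t) * cnj (cis (real k * t))) =
    (if j = k then 2 * pi else 0)"
proof -
  have "cis (real j * t) * cnj (cis (real k * t)) = cis (of_int (int j - int k) * t)" for t
    by (simp add: cis_mult cis_cnj algebra_simps)
  hence "(LINT t:{0..2*pi}|lborel. cis (real j * t) * cnj (cis (real k * t))) =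
      (LINT t:{0..2*pi}|lborel. cis (of_int (int j - int k) * t))"
    by simp
  also have "\<dots> = (if j = k then 2 * pi else 0)"
    by (subst integral_cis_int) auto
  finally show ?thesis .
qed

lemma set_lebesgue_integral_sum:
  fixes f :: "'i \<Rightarrow> real \<Rightarrow> complex"
  assumes "finite S" "\<And>i. i \<in> S \<Longrightarrow> set_integrable lborel A (f i)"
  shows "(LINT t:A|lborel. (\<Sum>i\<in>S. f i t)) = (\<Sum>i\<in>S. LINT t:A|lborel. f i t)"
    and "set_integrable lborel A (\<lambda>t. \<Sum>i\<in>S. f i t)"
proof -
  have "(LINT t:A|lborel. (\<Sum>i\<in>S. f i t)) = integral\<^sup>L lborel (\<lambda>t. \<Sum>i\<in>S. indicator A t *\<^sub>R f i t)"
    unfolding set_lebesgue_integral_def by (simp add: scaleR_sum_right)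
  also have "\<dots> = (\<Sum>i\<in>S. integral\<^sup>L lborel (\<lambda>t. indicator A t *\<^sub>R f i t))"
    by (rule Bochner_Integration.integral_sum) (use assms(2) in \<open>auto simp: set_integrable_def\<close>)
  finally show "(LINT t:A|lborel. (\<Sum>i\<in>S. f i t)) = (\<Sum>i\<in>S. LINT t:A|lborel. f i t)"
    by (simp add: set_lebesgue_integral_def)
  show "set_integrable lborel A (\<lambda>t. \<Sum>i\<in>S. f i t)"
    unfolding set_integrable_def scaleR_sum_right
    by (rule Bochner_Integration.integrable_sum) (use assms(2) in \<open>auto simp: set_integrable_def\<close>)
qed

lemma set_integrable_cis_mult_cnj_cis [simp]:
  "set_integrable lborel {0..2*pi} (\<lambda>t. c * cis (real j * t) * cnj (cis (real k * t)))"
  by (rule borel_integrable_atLeastAtMost') (intro continuous_intros)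

lemma parseval_finite:
  fixes a b :: "nat \<Rightarrow> complex"
  shows "(LINT t:{0..2*pi}|lborel. (\<Sum>j<N. a j * cis (real j * t)) * cnj (\<Sum>k<N. b k * cis (real k * t)))
      = 2 * pi * (\<Sum>j<N. a j * cnj (b j))"
proof -
  have e: "(\<Sum>j<N. a j * cis (real j * t)) * cnj (\<Sum>k<N. b k * cis (real k * t)) =
      (\<Sum>j<N. \<Sum>k<N. (a j * cnj (b k)) * cis (real j * t) * cnj (cis (real k * t)))" for t
    by (simp add: sum_product cnj_sum mult_ac)
  have "(LINT t:{0..2*pi}|lborel. (\<Sum>j<N. a j * cis (real j * t)) * cnj (\<Sum>k<N. b k * cis (real k * t)))
     = (\<Sum>j<N. \<Sum>k<N. LINT t:{0..2*pi}|lborel. (a j * cnj (b k)) * cis (real j * t) * cnj (cis (real k * t)))"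
    unfolding e
    by (subst set_lebesgue_integral_sum(1), simp, rule set_lebesgue_integral_sum(2), simp, simp)
       (subst set_lebesgue_integral_sum(1), auto)
  also have "\<dots> = (\<Sum>j<N. \<Sum>k<N. (a j * cnj (b k)) * (if j = k then 2 * pi else 0))"
    by (simp only: mult.assoc set_integral_mult_right integral_cis_mult_cnj_cis)
  also have "\<dots> = 2 * pi * (\<Sum>j<N. a j * cnj (b j))"
    by (simp add: sum_distrib_left mult_ac if_distrib sum.delta cong: if_cong)
  finally show ?thesis .
qed

lemma borel_measurable_cis_mult [measurable]: "(\<lambda>x. cis (c * x)) \<in> borel_measurable borel"
  by (rule borel_measurable_continuous_onI) (intro continuous_intros)

lemma borel_measurable_cnj [measurable (raw)]:
  "f \<in> borel_measurable M \<Longrightarrow> (\<lambda>x. cnj (f x :: complex)) \<in> borel_measurable M"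
  using borel_measurable_continuous_onI[of cnj] continuous_on_cnj[of UNIV "\<lambda>x. x"]
  by (simp add: measurable_compose[of f M borel cnj])

lemma norm_trig_partial_sum_le:
  fixes c :: "nat \<Rightarrow> complex"
  assumes "summable (\<lambda>j. norm (c j))"
  shows "norm (\<Sum>j<N. c j * cis (real j * t)) \<le> (\<Sum>j. norm (c j))"
proof -
  have "norm (\<Sum>j<N. c j * cis (real j * t)) \<le> (\<Sum>j<N. norm (c j))"
    by (rule order_trans[OF norm_sum]) (simp add: norm_mult)
  also have "\<dots> \<le> (\<Sum>j. norm (c j))"
    by (rule sum_le_suminf[OF assms]) auto
  finally show ?thesis .
qed

lemma trig_partial_sum_tendsto:
  fixes c :: "nat \<Rightarrow> complex"
  assumes "summable (\<lambda>j. norm (c j))"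
  shows "(\<lambda>N. \<Sum>j<N. c j * cis (real j * t)) \<longlonglongrightarrow> (\<Sum>j. c j * cis (real j * t))"
proof -
  have "summable (\<lambda>j. norm (c j * cis (real j * t)))" using assms by (simp add: norm_mult)
  thus ?thesis by (rule summable_LIMSEQ[OF summable_norm_cancel])
qed

lemma parseval_abs_summable:
  fixes a b :: "nat \<Rightarrow> complex"
  assumes a: "summable (\<lambda>j. norm (a j))" and b: "summable (\<lambda>j. norm (b j))"
  shows "(LINT t:{0..2*pi}|lborel. (\<Sum>j. a j * cis (real j * t)) * cnj (\<Sum>k. b k * cis (real k * t)))
      = 2 * pi * (\<Sum>j. a j * cnj (b j))"
proof -
  define I where "I = {0..2*pi}"
  define A where "A N t = (\<Sum>j<N. a j * cis (real j * t))" for N t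
  define B where "B N t = (\<Sum>j<N. b j * cis (real j * t))" for N t
  define s where "s N t = indicator I t *\<^sub>R (A N t * cnj (B N t))" for N t
  define f where "f t = indicator I t *\<^sub>R
      ((\<Sum>j. a j * cis (real j * t)) * cnj (\<Sum>k. b k * cis (real k * t)))" for t
  define w where "w t = indicator I t * ((\<Sum>j. norm (a j)) * (\<Sum>j. norm (b j)))" for t
  have "(\<lambda>N. integral\<^sup>L lborel (s N)) \<longlonglongrightarrow> integral\<^sup>L lborel f"
  proof (rule integral_dominated_convergence)
    show "f \<in> borel_measurable lborel" "s N \<in> borel_measurable lborel" for N
      unfolding f_def s_def A_def B_def I_def by measurable
    show "integrable lborel w"
      unfolding w_def I_def by (intro integrable_mult_left) auto
    show "AE t in lborel. (\<lambda>N. s N t) \<longlonglongrightarrow> f t"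
      unfolding s_def f_def A_def B_def by (intro AE_I2 tendsto_intros trig_partial_sum_tendsto a b)
    show "AE t in lborel. norm (s N t) \<le> w t" for N
    proof (intro AE_I2)
      fix t
      have "norm (A N t * cnj (B N t)) \<le> (\<Sum>j. norm (a j)) * (\<Sum>j. norm (b j))"
        unfolding norm_mult complex_mod_cnj A_def B_def
        by (intro mult_mono norm_trig_partial_sum_le a b) (auto intro: suminf_nonneg a)
      thus "norm (s N t) \<le> w t" unfolding s_def w_def by (auto simp: indicator_def)
    qed
  qed
  moreover have "integral\<^sup>L lborel (s N) = 2 * pi * (\<Sum>j<N. a j * cnj (b j))" for N
    using parseval_finite[of a N b] unfolding s_def A_def B_def I_def set_lebesgue_integral_def .
  ultimately have "(\<lambda>N. 2 * pi * (\<Sum>j<N. a j * cnj (b j))) \<longlonglongrightarrow> integral\<^sup>L lborel f"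
    by simp
  moreover have "(\<lambda>N. 2 * pi * (\<Sum>j<N. a j * cnj (b j))) \<longlonglongrightarrow> 2 * pi * (\<Sum>j. a j * cnj (b j))"
  proof -
    have "summable (\<lambda>j. a j * cnj (b j))"
      by (rule summable_norm_cancel[OF summable_mult_cnj_abs_summable[OF a b]])
    thus ?thesis by (intro tendsto_intros summable_LIMSEQ)
  qed
  ultimately have "integral\<^sup>L lborel f = 2 * pi * (\<Sum>j. a j * cnj (b j))"
    using LIMSEQ_unique by blast
  thus ?thesis unfolding f_def I_def set_lebesgue_integral_def .
qed

lemma u_coeff_0: "u_coeff \<alpha> 0 j = of_real (psi_const \<alpha>) * cnj \<alpha> ^ j"
  by (simp add: u_coeff_def)

lemma theta_mult_cnj_on_circle:
  assumes "norm \<alpha> < 1" "\<alpha> \<noteq> 0" "norm z = 1"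
  shows "theta_fn \<alpha> z * cnj (theta_fn \<alpha> z) = 1"
proof -
  have "z * cnj z = 1"
    using assms(3) by (metis complex_norm_square mult.commute norm_one of_real_1 power_one)
  hence "1 - cnj \<alpha> * z = z * cnj (z - \<alpha>)" by (simp add: algebra_simps)
  moreover have "norm (cnj (z - \<alpha>)) = norm (\<alpha> - z)"
    by (simp only: complex_mod_cnj norm_minus_commute)
  ultimately have n: "norm (1 - cnj \<alpha> * z) = norm (\<alpha> - z)"
    using assms(3) by (simp only: norm_mult)
  have "norm (cnj \<alpha> * z) < 1" using assms by (simp add: norm_mult)
  hence "1 - cnj \<alpha> * z \<noteq> 0" by auto
  moreover have "\<alpha> \<noteq> z" using assms by auto
  ultimately have "norm (theta_fn \<alpha> z) = 1"
    using assms(2) n by (simp add: theta_fn_def norm_mult norm_divide)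
  thus ?thesis by (metis complex_norm_square mult.commute norm_one of_real_1 power_one)
qed

lemma psi_const_mult_psi_alpha:
  assumes "norm \<alpha> < 1"
  shows "of_real (psi_const \<alpha>) * psi_fn \<alpha> \<alpha> = 1"
proof -
  have l: "(norm \<alpha>)\<^sup>2 < 1" using assms by (simp add: abs_square_less_1)
  have "cnj \<alpha> * \<alpha> = of_real ((norm \<alpha>)\<^sup>2)"
    by (simp only: complex_norm_square mult.commute)
  hence "1 - cnj \<alpha> * \<alpha> = of_real (1 - (norm \<alpha>)\<^sup>2)" by simp
  hence "of_real (psi_const \<alpha>) * psi_fn \<alpha> \<alpha> =
      of_real (psi_const \<alpha>) * (of_real (psi_const \<alpha>) / of_real (1 - (norm \<alpha>)\<^sup>2))"
    unfolding psi_fn_def by simp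
  also have "\<dots> = of_real (psi_const \<alpha> * psi_const \<alpha> / (1 - (norm \<alpha>)\<^sup>2))"
    by (simp only: of_real_mult of_real_divide times_divide_eq_right)
  also have "\<dots> = 1" using l by simp
  finally show ?thesis .
qed

lemma theta_alpha_eq_0: "\<alpha> \<noteq> 0 \<Longrightarrow> theta_fn \<alpha> \<alpha> = 0"
  by (simp add: theta_fn_def)

lemma u_coeff_series_on_circle:
  assumes "norm \<alpha> < 1" "\<alpha> \<noteq> 0"
  shows "(\<Sum>j. u_coeff \<alpha> i j * cis (real j * t)) = psi_fn \<alpha> (cis t) * theta_fn \<alpha> (cis t) ^ i"
proof -
  have "norm (cnj \<alpha> * cis t) < 1" using assms by (simp add: norm_mult)
  from sums_unique[OF u_coeff_sums[OF assms(2) this, of i]]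
  have "psi_fn \<alpha> (cis t) * theta_fn \<alpha> (cis t) ^ i = (\<Sum>j. u_coeff \<alpha> i j * cis t ^ j)" .
  also have "(\<lambda>j. u_coeff \<alpha> i j * cis t ^ j) = (\<lambda>j. u_coeff \<alpha> i j * cis (real j * t))"
    by (simp only: Complex.DeMoivre)
  finally show ?thesis by simp
qed

text \<open>On the circle \<open>\<psi> \<theta>\<^sup>i \<cdot> conj (\<psi> \<theta>\<^sup>k) = \<psi> \<theta>\<^sup>i\<^sup>-\<^sup>k \<cdot> conj \<psi>\<close>, and the inner product of
  \<open>\<psi> \<theta>\<^sup>i\<^sup>-\<^sup>k\<close> with the reproducing kernel \<open>\<psi> / psi_const \<alpha>\<close> at \<open>\<alpha>\<close> is its value there.\<close>

lemma u_coeff_orthonormal_ge: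
  assumes a: "norm \<alpha> < 1" "\<alpha> \<noteq> 0" and ik: "k \<le> i"
  shows "(\<Sum>j. u_coeff \<alpha> i j * cnj (u_coeff \<alpha> k j)) = (if i = k then 1 else 0)"
proof -
  define F where "F p t = psi_fn \<alpha> (cis t) * theta_fn \<alpha> (cis t) ^ p" for p t
  have shift: "F i t * cnj (F k t) = F (i - k) t * cnj (F 0 t)" for t
  proof -
    have "theta_fn \<alpha> (cis t) ^ i = theta_fn \<alpha> (cis t) ^ (i - k) * theta_fn \<alpha> (cis t) ^ k"
      using ik by (simp add: power_add[symmetric])
    hence "F i t * cnj (F k t) =
        F (i - k) t * cnj (F 0 t) * (theta_fn \<alpha> (cis t) * cnj (theta_fn \<alpha> (cis t))) ^ k"
      unfolding F_def by (simp add: power_mult_distrib mult_ac)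
    thus ?thesis using theta_mult_cnj_on_circle[OF a] by simp
  qed
  have parseval: "2 * pi * (\<Sum>j. u_coeff \<alpha> p j * cnj (u_coeff \<alpha> q j)) =
      (LINT t:{0..2*pi}|lborel. F p t * cnj (F q t))" for p q
    unfolding F_def u_coeff_series_on_circle[OF a, symmetric]
    by (rule parseval_abs_summable[symmetric]) (rule u_coeff_row_abs_summable[OF a])+
  have "2 * pi * (\<Sum>j. u_coeff \<alpha> i j * cnj (u_coeff \<alpha> k j)) =
      2 * pi * (\<Sum>j. u_coeff \<alpha> (i - k) j * cnj (u_coeff \<alpha> 0 j))"
    unfolding parseval shift ..
  hence "(\<Sum>j. u_coeff \<alpha> i j * cnj (u_coeff \<alpha> k j)) = (\<Sum>j. u_coeff \<alpha> (i - k) j * cnj (u_coeff \<alpha> 0 j))"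
    by simp
  also have "\<dots> = (\<Sum>j. of_real (psi_const \<alpha>) * (u_coeff \<alpha> (i - k) j * \<alpha> ^ j))"
    by (simp add: u_coeff_0 mult_ac)
  also have "\<dots> = of_real (psi_const \<alpha>) * (psi_fn \<alpha> \<alpha> * theta_fn \<alpha> \<alpha> ^ (i - k))"
    using a by (intro sums_unique[symmetric] sums_mult u_coeff_sums)
      (auto simp: norm_mult abs_square_less_1 power2_eq_square[symmetric])
  also have "\<dots> = (if i = k then 1 else 0)"
    using ik psi_const_mult_psi_alpha[OF a(1)] theta_alpha_eq_0[OF a(2)] by auto
  finally show ?thesis .
qed

lemma u_coeff_orthonormal:
  assumes a: "norm \<alpha> < 1" "\<alpha> \<noteq> 0"
  shows "(\<Sum>j. u_coeff \<alpha> i j * cnj (u_coeff \<alpha> k j)) = (if i = k then 1 else 0)"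
proof (cases "k \<le> i")
  case True thus ?thesis by (rule u_coeff_orthonormal_ge[OF a])
next
  case False
  hence "(\<Sum>j. u_coeff \<alpha> k j * cnj (u_coeff \<alpha> i j)) = 0"
    using u_coeff_orthonormal_ge[OF a, of i k] by simp
  moreover have "summable (\<lambda>j. u_coeff \<alpha> k j * cnj (u_coeff \<alpha> i j))"
    by (rule summable_norm_cancel[OF summable_mult_cnj_abs_summable])
      (rule u_coeff_row_abs_summable[OF a])+
  ultimately have "(\<lambda>j. u_coeff \<alpha> k j * cnj (u_coeff \<alpha> i j)) sums 0"
    by (metis summable_sums)
  hence "(\<lambda>j. cnj (u_coeff \<alpha> k j * cnj (u_coeff \<alpha> i j))) sums cnj 0"
    by (simp only: sums_cnj)
  hence "(\<lambda>j. u_coeff \<alpha> i j * cnj (u_coeff \<alpha> k j)) sums 0"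
    by (simp add: mult.commute)
  thus ?thesis using False by (simp add: sums_iff)
qed

section \<open>Square-summable sequences\<close>

definition h2_norm2 :: "(nat \<Rightarrow> complex) \<Rightarrow> real" where
  "h2_norm2 x = (\<Sum>n. (cmod (x n))\<^sup>2)"

abbreviation h2_dist2 :: "(nat \<Rightarrow> complex) \<Rightarrow> (nat \<Rightarrow> complex) \<Rightarrow> real" where
  "h2_dist2 x y \<equiv> h2_norm2 (\<lambda>n. x n - y n)"

definition h2_trunc :: "nat \<Rightarrow> (nat \<Rightarrow> complex) \<Rightarrow> nat \<Rightarrow> complex" where
  "h2_trunc N h = (\<lambda>j. if j < N then h j else 0)"

definition unit_vec :: "nat \<Rightarrow> nat \<Rightarrow> complex" where
  "unit_vec n = (\<lambda>k. if k = n then 1 else 0)"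

lemma mem_H2_iff: "x \<in> H2 \<longleftrightarrow> summable (\<lambda>n. (cmod (x n))\<^sup>2)"
  by (simp add: H2_def)

lemma h2_norm2_nonneg: "x \<in> H2 \<Longrightarrow> h2_norm2 x \<ge> 0"
  unfolding h2_norm2_def mem_H2_iff by (rule suminf_nonneg) auto

lemma norm_sq_le_h2_norm2: "x \<in> H2 \<Longrightarrow> (cmod (x n))\<^sup>2 \<le> h2_norm2 x"
  unfolding h2_norm2_def mem_H2_iff by (rule suminf_ge_term) auto

lemma h2_norm2_cnj [simp]: "h2_norm2 (\<lambda>i. cnj (x i)) = h2_norm2 x"
  by (simp add: h2_norm2_def)

lemma H2_cnj: "x \<in> H2 \<Longrightarrow> (\<lambda>n. cnj (x n)) \<in> H2"
  by (simp add: mem_H2_iff)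

lemma H2_trunc: "h2_trunc N x \<in> H2"
  unfolding mem_H2_iff h2_trunc_def by (rule summable_finite[of "{..<N}"]) auto

lemma H2_unit_vec: "unit_vec n \<in> H2"
  unfolding mem_H2_iff unit_vec_def by (rule summable_finite[of "{n}"]) auto

lemma H2_add:
  assumes "x \<in> H2" "y \<in> H2"
  shows "(\<lambda>n. x n + y n) \<in> H2"
proof -
  have "(cmod (x n + y n))\<^sup>2 \<le> 2 * (cmod (x n))\<^sup>2 + 2 * (cmod (y n))\<^sup>2" for n
  proof -
    have "(cmod (x n + y n))\<^sup>2 \<le> (cmod (x n) + cmod (y n))\<^sup>2"
      by (intro power_mono norm_triangle_ineq) auto
    also have "\<dots> \<le> 2 * (cmod (x n))\<^sup>2 + 2 * (cmod (y n))\<^sup>2"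
      using sum_squares_bound[of "cmod (x n)" "cmod (y n)"] by (simp add: power2_sum)
    finally show ?thesis .
  qed
  moreover have "summable (\<lambda>n. 2 * (cmod (x n))\<^sup>2 + 2 * (cmod (y n))\<^sup>2)"
    using assms by (auto simp: mem_H2_iff intro!: summable_add summable_mult)
  ultimately show ?thesis unfolding mem_H2_iff
    by (intro summable_comparison_test[OF _ \<open>summable _\<close>]) auto
qed

lemma H2_scale: "x \<in> H2 \<Longrightarrow> (\<lambda>n. c * x n) \<in> H2"
  by (simp add: mem_H2_iff norm_mult power_mult_distrib summable_mult)

lemma H2_diff: "x \<in> H2 \<Longrightarrow> y \<in> H2 \<Longrightarrow> (\<lambda>n. x n - y n) \<in> H2"
  using H2_add[OF _ H2_scale[of y "-1"]] by simp

lemma H2_sum: "(\<And>k. k \<in> K \<Longrightarrow> y k \<in> H2) \<Longrightarrow> (\<lambda>j. \<Sum>k\<in>K. c k * y k j) \<in> H2"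
proof (induction K rule: infinite_finite_induct)
  case (infinite K)
  thus ?case using H2_trunc[of 0] by (simp add: h2_trunc_def)
next
  case empty
  thus ?case using H2_trunc[of 0] by (simp add: h2_trunc_def)
next
  case (insert k K)
  thus ?case by (simp add: H2_add H2_scale)
qed

lemma H2_if_abs_summable:
  assumes "summable (\<lambda>n. norm (x n))"
  shows "x \<in> H2"
proof -
  have "eventually (\<lambda>n. norm (x n) < 1) sequentially"
    using summable_LIMSEQ_zero[OF assms] by (rule order_tendstoD) simp
  hence "eventually (\<lambda>n. norm ((cmod (x n))\<^sup>2) \<le> norm (x n)) sequentially"
    by eventually_elim (simp add: power2_eq_square mult_left_le)
  thus ?thesis unfolding mem_H2_iff
    by (intro summable_comparison_test_ev[OF _ assms])
qed

lemma H2_bounded: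
  assumes "x \<in> H2"
  obtains B where "\<And>n. cmod (x n) \<le> B"
  using norm_sq_le_h2_norm2[OF assms] real_le_rsqrt by blast

lemma summable_norm_mult_norm:
  assumes "x \<in> H2" "y \<in> H2"
  shows "summable (\<lambda>n. cmod (x n) * cmod (y n))"
proof (rule summable_comparison_test[OF _ summable_add[OF assms[unfolded mem_H2_iff]]])
  have "2 * (cmod (x n) * cmod (y n)) \<le> (cmod (x n))\<^sup>2 + (cmod (y n))\<^sup>2" for n
    using sum_squares_bound[of "cmod (x n)" "cmod (y n)"] by (simp add: mult_ac)
  thus "\<exists>N. \<forall>n\<ge>N. norm (cmod (x n) * cmod (y n)) \<le> (cmod (x n))\<^sup>2 + (cmod (y n))\<^sup>2"
    by (intro exI[of _ 0] allI impI) (simp, smt (verit) mult_nonneg_nonneg norm_ge_zero)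
qed

lemma summable_h2_inner:
  assumes "x \<in> H2" "y \<in> H2"
  shows "summable (\<lambda>n. x n * cnj (y n))"
  by (rule summable_norm_cancel) (use summable_norm_mult_norm[OF assms] in \<open>simp add: norm_mult\<close>)

lemma h2_cauchy_schwarz:
  assumes "x \<in> H2" "y \<in> H2"
  shows "(cmod (h2_inner x y))\<^sup>2 \<le> h2_norm2 x * h2_norm2 y"
proof -
  have sx: "summable (\<lambda>n. (cmod (x n))\<^sup>2)" and sy: "summable (\<lambda>n. (cmod (y n))\<^sup>2)"
    using assms by (auto simp: mem_H2_iff)
  note sxy = summable_norm_mult_norm[OF assms]
  have partial: "(\<Sum>n<N. cmod (x n) * cmod (y n))\<^sup>2 \<le> h2_norm2 x * h2_norm2 y" for N
  proof -
    have "(\<Sum>n<N. cmod (x n) * cmod (y n))\<^sup>2 \<le> (\<Sum>n<N. (cmod (x n))\<^sup>2) * (\<Sum>n<N. (cmod (y n))\<^sup>2)"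
      by (rule Cauchy_Schwarz_ineq_sum)
    also have "\<dots> \<le> h2_norm2 x * h2_norm2 y"
      unfolding h2_norm2_def
      by (intro mult_mono sum_le_suminf sx sy suminf_nonneg sum_nonneg) auto
    finally show ?thesis .
  qed
  have "(\<lambda>N. (\<Sum>n<N. cmod (x n) * cmod (y n))\<^sup>2) \<longlonglongrightarrow> (\<Sum>n. cmod (x n) * cmod (y n))\<^sup>2"
    by (intro tendsto_intros summable_LIMSEQ sxy)
  hence "(\<Sum>n. cmod (x n) * cmod (y n))\<^sup>2 \<le> h2_norm2 x * h2_norm2 y"
    by (rule LIMSEQ_le_const2) (use partial in auto)
  moreover have "cmod (h2_inner x y) \<le> (\<Sum>n. cmod (x n) * cmod (y n))"
    unfolding h2_inner_def
    using summable_norm[of "\<lambda>n. x n * cnj (y n)"] sxy by (simp add: norm_mult)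
  hence "(cmod (h2_inner x y))\<^sup>2 \<le> (\<Sum>n. cmod (x n) * cmod (y n))\<^sup>2"
    by (intro power_mono) auto
  ultimately show ?thesis by linarith
qed

lemma h2_dist2_commute: "h2_dist2 x y = h2_dist2 y x"
  by (simp add: h2_norm2_def norm_minus_commute)

lemma h2_dist2_cnj [simp]: "h2_dist2 (\<lambda>n. cnj (x n)) (\<lambda>n. cnj (y n)) = h2_dist2 x y"
  using h2_norm2_cnj[of "\<lambda>n. x n - y n"] by simp

lemma norm_sq_diff_le_h2_dist2:
  "x \<in> H2 \<Longrightarrow> y \<in> H2 \<Longrightarrow> (cmod (x n - y n))\<^sup>2 \<le> h2_dist2 x y"
  using norm_sq_le_h2_norm2[OF H2_diff] by simp

lemma h2_inner_diff_left:
  assumes "x \<in> H2" "y \<in> H2" "g \<in> H2"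
  shows "h2_inner (\<lambda>n. x n - y n) g = h2_inner x g - h2_inner y g"
  unfolding h2_inner_def
  using suminf_diff[OF summable_h2_inner[OF assms(1,3)] summable_h2_inner[OF assms(2,3)]]
  by (simp add: algebra_simps)

lemma h2_dist2_trunc_tendsto:
  assumes "x \<in> H2"
  shows "(\<lambda>N. h2_dist2 x (h2_trunc N x)) \<longlonglongrightarrow> 0"
proof -
  have s: "summable (\<lambda>n. (cmod (x n))\<^sup>2)" using assms by (simp add: mem_H2_iff)
  have tail: "h2_dist2 x (h2_trunc N x) = h2_norm2 x - (\<Sum>n<N. (cmod (x n))\<^sup>2)" for N
  proof -
    have "(\<lambda>n. (cmod (x n - h2_trunc N x n))\<^sup>2) = (\<lambda>n. if n \<in> {..<N} then 0 else (cmod (x n))\<^sup>2)"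
      by (auto simp: h2_trunc_def)
    moreover have "(\<lambda>n. if n \<in> {..<N} then 0 else (cmod (x n))\<^sup>2) sums
        (h2_norm2 x - (\<Sum>n<N. (cmod (x n))\<^sup>2))"
      unfolding h2_norm2_def by (rule sums_If_finite_set'[OF summable_sums[OF s]]) (auto simp: sum_negf)
    ultimately show ?thesis unfolding h2_norm2_def by (simp add: sums_iff)
  qed
  have "(\<lambda>N. h2_norm2 x - (\<Sum>n<N. (cmod (x n))\<^sup>2)) \<longlonglongrightarrow> h2_norm2 x - h2_norm2 x"
    unfolding h2_norm2_def by (intro tendsto_intros summable_LIMSEQ s)
  thus ?thesis unfolding tail by simp
qed

lemma tendsto_if_norm_sq_le:
  fixes x :: "nat \<Rightarrow> complex"
  assumes le: "\<And>N. (cmod (x N - L))\<^sup>2 \<le> d N" and d: "d \<longlonglongrightarrow> 0"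
  shows "x \<longlonglongrightarrow> L"
proof -
  have sqrt_d: "(\<lambda>N. sqrt (d N)) \<longlonglongrightarrow> 0" using tendsto_real_sqrt[OF d] by simp
  have "cmod (x N - L) \<le> sqrt (d N)" for N using le[of N] real_le_rsqrt by blast
  hence "(\<lambda>N. cmod (x N - L)) \<longlonglongrightarrow> 0"
    by (intro tendsto_sandwich[OF _ _ tendsto_const sqrt_d] always_eventually allI) auto
  thus ?thesis by (simp add: tendsto_norm_zero_iff LIM_zero_iff)
qed

lemma tendsto_coordinate_if_h2_dist2:
  assumes "\<And>N. x N \<in> H2" "y \<in> H2" "(\<lambda>N. h2_dist2 (x N) y) \<longlonglongrightarrow> 0"
  shows "(\<lambda>N. x N m) \<longlonglongrightarrow> y m"
proof (rule tendsto_if_norm_sq_le[OF _ assms(3)])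
  show "(cmod (x N m - y m))\<^sup>2 \<le> h2_dist2 (x N) y" for N
    by (rule norm_sq_diff_le_h2_dist2[OF assms(1,2)])
qed

lemma h2_inner_tendsto_left:
  assumes "\<And>N. x N \<in> H2" "y \<in> H2" "g \<in> H2" "(\<lambda>N. h2_dist2 (x N) y) \<longlonglongrightarrow> 0"
  shows "(\<lambda>N. h2_inner (x N) g) \<longlonglongrightarrow> h2_inner y g"
proof (rule tendsto_if_norm_sq_le)
  fix N
  have "(cmod (h2_inner (x N) g - h2_inner y g))\<^sup>2 = (cmod (h2_inner (\<lambda>n. x N n - y n) g))\<^sup>2"
    by (simp add: h2_inner_diff_left assms)
  also have "\<dots> \<le> h2_dist2 (x N) y * h2_norm2 g"
    by (intro h2_cauchy_schwarz H2_diff assms)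
  finally show "(cmod (h2_inner (x N) g - h2_inner y g))\<^sup>2 \<le> h2_dist2 (x N) y * h2_norm2 g" .
next
  show "(\<lambda>N. h2_dist2 (x N) y * h2_norm2 g) \<longlonglongrightarrow> 0"
    by (rule tendsto_mult_left_zero[OF assms(4)])
qed

lemma h2_dist2_trunc_tendsto_if_lipschitz:
  assumes L_H2: "\<And>x. x \<in> H2 \<Longrightarrow> L x \<in> H2"
    and lipschitz: "\<And>x y. x \<in> H2 \<Longrightarrow> y \<in> H2 \<Longrightarrow> h2_dist2 (L x) (L y) \<le> B * h2_dist2 x y"
    and f: "f \<in> H2"
  shows "(\<lambda>N. h2_dist2 (L (h2_trunc N f)) (L f)) \<longlonglongrightarrow> 0"
proof (rule tendsto_sandwich[OF _ _ tendsto_const])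
  show "\<forall>\<^sub>F N in sequentially. 0 \<le> h2_dist2 (L (h2_trunc N f)) (L f)"
    by (intro always_eventually allI h2_norm2_nonneg H2_diff L_H2 H2_trunc f)
  show "\<forall>\<^sub>F N in sequentially. h2_dist2 (L (h2_trunc N f)) (L f) \<le> B * h2_dist2 f (h2_trunc N f)"
    using lipschitz[OF H2_trunc f] by (intro always_eventually allI) (simp add: h2_dist2_commute)
  show "(\<lambda>N. B * h2_dist2 f (h2_trunc N f)) \<longlonglongrightarrow> 0"
    by (intro tendsto_mult_right_zero h2_dist2_trunc_tendsto f)
qed

lemma suminf_mult_unit_vec [simp]:
  "(\<Sum>k. x k * unit_vec n k) = x n" "(\<Sum>k. unit_vec n k * x k) = x n"
proof -
  have "(\<lambda>k. x k * unit_vec n k) sums (\<Sum>k\<in>{n}. x k * unit_vec n k)"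
    by (rule sums_finite) (auto simp: unit_vec_def)
  thus "(\<Sum>k. x k * unit_vec n k) = x n" by (simp add: sums_iff unit_vec_def)
  thus "(\<Sum>k. unit_vec n k * x k) = x n" by (simp add: mult.commute)
qed

lemma h2_trunc_eq_sum_unit_vec: "h2_trunc N x = (\<lambda>j. \<Sum>k<N. x k * unit_vec k j)"
  by (auto simp: h2_trunc_def unit_vec_def if_distrib sum.delta cong: if_cong)

section \<open>Bounded infinite matrices\<close>

definition mat_apply :: "(nat \<Rightarrow> nat \<Rightarrow> complex) \<Rightarrow> (nat \<Rightarrow> complex) \<Rightarrow> nat \<Rightarrow> complex" where
  "mat_apply a h = (\<lambda>i. \<Sum>j. a i j * h j)"

definition matrix_adjoint :: "(nat \<Rightarrow> nat \<Rightarrow> complex) \<Rightarrow> nat \<Rightarrow> nat \<Rightarrow> complex" where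
  "matrix_adjoint a i j = cnj (a j i)"

lemma mat_apply_h2_trunc: "mat_apply a (h2_trunc N h) = (\<lambda>i. \<Sum>j<N. a i j * h j)"
proof
  fix i
  have "(\<lambda>j. a i j * h2_trunc N h j) sums (\<Sum>j<N. a i j * h2_trunc N h j)"
    by (rule sums_finite) (auto simp: h2_trunc_def)
  thus "mat_apply a (h2_trunc N h) i = (\<Sum>j<N. a i j * h j)"
    unfolding mat_apply_def by (simp add: sums_iff h2_trunc_def)
qed

text \<open>Boundedness on \<open>\<ell>\<^sup>2\<close> is encoded through the finite sections, so no convergence of the
  defining series has to be assumed in advance.\<close>

locale bounded_matrix =
  fixes a :: "nat \<Rightarrow> nat \<Rightarrow> complex" and C :: real
  assumes bound_nonneg: "C \<ge> 0"
    and finite_section_bound: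
      "\<And>h N K. (\<Sum>i<K. (cmod (\<Sum>j<N. a i j * h j))\<^sup>2) \<le> C * (\<Sum>j<N. (cmod (h j))\<^sup>2)"
begin

lemma row_H2: "(\<lambda>j. a i j) \<in> H2"
  unfolding mem_H2_iff
proof (rule summableI_nonneg_bounded[where x = C])
  fix n
  define s where "s = (\<Sum>j<n. (cmod (a i j))\<^sup>2)"
  have s0: "s \<ge> 0" unfolding s_def by (intro sum_nonneg) auto
  have "(\<Sum>j<n. a i j * cnj (a i j)) = of_real s"
    unfolding s_def of_real_sum by (intro sum.cong refl) (simp only: complex_norm_square)
  hence "s\<^sup>2 = (cmod (\<Sum>j<n. a i j * cnj (a i j)))\<^sup>2" using s0 by simp
  also have "\<dots> \<le> (\<Sum>i'<Suc i. (cmod (\<Sum>j<n. a i' j * cnj (a i j)))\<^sup>2)"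
    by (rule member_le_sum[where f = "\<lambda>i'. (cmod (\<Sum>j<n. a i' j * cnj (a i j)))\<^sup>2" and i = i]) auto
  also have "\<dots> \<le> C * (\<Sum>j<n. (cmod (cnj (a i j)))\<^sup>2)" by (rule finite_section_bound)
  also have "\<dots> = C * s" by (simp add: s_def)
  finally have "s * s \<le> C * s" by (simp add: power2_eq_square)
  hence "s \<le> C" using s0 bound_nonneg by (cases "s = 0") (auto simp: mult_le_cancel_right)
  thus "(\<Sum>j<n. (cmod (a i j))\<^sup>2) \<le> C" unfolding s_def .
qed auto

lemma row_summable: "h \<in> H2 \<Longrightarrow> summable (\<lambda>j. a i j * h j)"
  using summable_h2_inner[OF row_H2[of i] H2_cnj[of h]] by simp

lemma mat_apply_H2:
  assumes h: "h \<in> H2"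
  shows "mat_apply a h \<in> H2" and "h2_norm2 (mat_apply a h) \<le> C * h2_norm2 h"
proof -
  have partial: "(\<Sum>i<K. (cmod (mat_apply a h i))\<^sup>2) \<le> C * h2_norm2 h" for K
  proof -
    have "(\<lambda>N. \<Sum>i<K. (cmod (\<Sum>j<N. a i j * h j))\<^sup>2) \<longlonglongrightarrow> (\<Sum>i<K. (cmod (mat_apply a h i))\<^sup>2)"
      unfolding mat_apply_def by (intro tendsto_intros summable_LIMSEQ row_summable h)
    moreover have "(\<Sum>i<K. (cmod (\<Sum>j<N. a i j * h j))\<^sup>2) \<le> C * h2_norm2 h" for N
    proof -
      have "(\<Sum>i<K. (cmod (\<Sum>j<N. a i j * h j))\<^sup>2) \<le> C * (\<Sum>j<N. (cmod (h j))\<^sup>2)"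
        by (rule finite_section_bound)
      also have "\<dots> \<le> C * h2_norm2 h"
        using h unfolding h2_norm2_def mem_H2_iff
        by (intro mult_left_mono bound_nonneg sum_le_suminf) auto
      finally show ?thesis .
    qed
    ultimately show ?thesis by (intro LIMSEQ_le_const2) auto
  qed
  show "mat_apply a h \<in> H2" unfolding mem_H2_iff
    by (rule summableI_nonneg_bounded[OF _ partial]) auto
  thus "h2_norm2 (mat_apply a h) \<le> C * h2_norm2 h" unfolding h2_norm2_def mem_H2_iff
    by (rule suminf_le_const) (rule partial[unfolded h2_norm2_def])
qed

lemma mat_apply_sum:
  assumes "\<And>k. k \<in> K \<Longrightarrow> y k \<in> H2"
  shows "mat_apply a (\<lambda>j. \<Sum>k\<in>K. c k * y k j) = (\<lambda>i. \<Sum>k\<in>K. c k * mat_apply a (y k) i)"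
proof
  fix i
  have "mat_apply a (\<lambda>j. \<Sum>k\<in>K. c k * y k j) i = (\<Sum>j. \<Sum>k\<in>K. c k * (a i j * y k j))"
    unfolding mat_apply_def by (simp add: sum_distrib_left mult_ac)
  also have "\<dots> = (\<Sum>k\<in>K. \<Sum>j. c k * (a i j * y k j))"
    using assms by (intro suminf_sum summable_mult row_summable)
  also have "\<dots> = (\<Sum>k\<in>K. c k * mat_apply a (y k) i)"
    using assms unfolding mat_apply_def by (intro sum.cong refl suminf_mult row_summable)
  finally show "mat_apply a (\<lambda>j. \<Sum>k\<in>K. c k * y k j) i = (\<Sum>k\<in>K. c k * mat_apply a (y k) i)" .
qed

lemma mat_apply_diff:
  assumes "h \<in> H2" "g \<in> H2"
  shows "mat_apply a (\<lambda>j. h j - g j) = (\<lambda>i. mat_apply a h i - mat_apply a g i)"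
proof
  fix i
  show "mat_apply a (\<lambda>j. h j - g j) i = mat_apply a h i - mat_apply a g i"
    using suminf_diff[OF row_summable[OF assms(1)] row_summable[OF assms(2)], of i]
    unfolding mat_apply_def by (simp add: algebra_simps)
qed

lemma h2_dist2_mat_apply_le:
  assumes "h \<in> H2" "g \<in> H2"
  shows "h2_dist2 (mat_apply a h) (mat_apply a g) \<le> C * h2_dist2 h g"
  using mat_apply_H2(2)[OF H2_diff[OF assms]] mat_apply_diff[OF assms] by simp

end

text \<open>The weight \<open>l\<close> of the arithmetic-geometric mean inequality is left free in the form bound:
  \<open>l = M\<close> controls the matrix and \<open>l = 1 / M\<close> its adjoint.\<close>

lemma bounded_matrix_if_form_bound:
  fixes a :: "nat \<Rightarrow> nat \<Rightarrow> complex"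
  assumes M: "M > 0"
    and form: "\<And>f g K N l. l > 0 \<Longrightarrow> cmod (\<Sum>m<K. \<Sum>k<N. a m k * f k * cnj (g m))
      \<le> M / 2 * (l * (\<Sum>k<N. (cmod (f k))\<^sup>2) + 1 / l * (\<Sum>m<K. (cmod (g m))\<^sup>2))"
  shows "bounded_matrix a (M\<^sup>2)"
proof
  fix h :: "nat \<Rightarrow> complex" and N K
  define g where "g m = (\<Sum>k<N. a m k * h k)" for m
  define X where "X = (\<Sum>m<K. (cmod (g m))\<^sup>2)"
  have "(\<Sum>m<K. \<Sum>k<N. a m k * h k * cnj (g m)) = (\<Sum>m<K. g m * cnj (g m))"
    unfolding g_def by (simp add: sum_distrib_right)
  also have "\<dots> = of_real X"
    unfolding X_def by (simp only: of_real_sum complex_norm_square)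
  finally have "cmod (of_real X) \<le> M / 2 * (M * (\<Sum>k<N. (cmod (h k))\<^sup>2) + 1 / M * X)"
    using form[where f = h and g = g and K = K and N = N and l = M] M unfolding X_def by simp
  moreover have "X \<ge> 0" unfolding X_def by (simp add: sum_nonneg)
  ultimately have "X \<le> M\<^sup>2 * (\<Sum>k<N. (cmod (h k))\<^sup>2)"
    using M by (simp add: field_simps power2_eq_square)
  thus "(\<Sum>i<K. (cmod (\<Sum>j<N. a i j * h j))\<^sup>2) \<le> M\<^sup>2 * (\<Sum>j<N. (cmod (h j))\<^sup>2)"
    by (simp add: X_def g_def)
qed simp

lemma bounded_matrix_adjoint_if_form_bound:
  fixes a :: "nat \<Rightarrow> nat \<Rightarrow> complex"
  assumes M: "M > 0"
    and form: "\<And>f g K N l. l > 0 \<Longrightarrow> cmod (\<Sum>m<K. \<Sum>k<N. a m k * f k * cnj (g m))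
      \<le> M / 2 * (l * (\<Sum>k<N. (cmod (f k))\<^sup>2) + 1 / l * (\<Sum>m<K. (cmod (g m))\<^sup>2))"
  shows "bounded_matrix (matrix_adjoint a) (M\<^sup>2)"
proof
  fix h :: "nat \<Rightarrow> complex" and N K
  define s where "s i = (\<Sum>j<N. matrix_adjoint a i j * h j)" for i
  define Y where "Y = (\<Sum>i<K. (cmod (s i))\<^sup>2)"
  have "cnj (s k) = (\<Sum>m<N. a m k * cnj (h m))" for k
    by (simp add: s_def matrix_adjoint_def cnj_sum)
  hence "(\<Sum>m<N. \<Sum>k<K. a m k * s k * cnj (h m)) = (\<Sum>k<K. s k * cnj (s k))"
    by (simp add: sum_distrib_left sum.swap[of _ "{..<N}"] mult_ac)
  also have "\<dots> = of_real Y"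
    unfolding Y_def by (simp only: of_real_sum complex_norm_square)
  finally have "cmod (of_real Y) \<le> M / 2 * (1 / M * Y + 1 / (1 / M) * (\<Sum>j<N. (cmod (h j))\<^sup>2))"
    using form[where f = s and g = h and K = N and N = K and l = "1 / M"] M unfolding Y_def by simp
  moreover have "Y \<ge> 0" unfolding Y_def by (simp add: sum_nonneg)
  ultimately have "Y \<le> M\<^sup>2 * (\<Sum>j<N. (cmod (h j))\<^sup>2)"
    using M by (simp add: field_simps power2_eq_square)
  thus "(\<Sum>i<K. (cmod (\<Sum>j<N. matrix_adjoint a i j * h j))\<^sup>2) \<le> M\<^sup>2 * (\<Sum>j<N. (cmod (h j))\<^sup>2)"
    by (simp add: Y_def s_def)
qed simp

lemma is_adjoint_mat_apply:
  assumes A: "bounded_matrix a C" and A': "bounded_matrix (matrix_adjoint a) C"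
  shows "is_adjoint (mat_apply a) (mat_apply (matrix_adjoint a))"
  unfolding is_adjoint_def
proof (intro conjI ballI)
  interpret A: bounded_matrix a C by (fact A)
  interpret A': bounded_matrix "matrix_adjoint a" C by (fact A')
  show "mat_apply (matrix_adjoint a) g \<in> H2" if "g \<in> H2" for g
    by (rule A'.mat_apply_H2(1)[OF that])
  fix f g assume f: "f \<in> H2" and g: "g \<in> H2"
  have col_inner: "summable (\<lambda>m. a m k * cnj (g m))" for k
    using summable_h2_inner[OF H2_cnj[OF A'.row_H2[of k]] g] by (simp add: matrix_adjoint_def)
  have trunc_inner: "h2_inner (mat_apply a (h2_trunc N f)) g =
      (\<Sum>k<N. f k * cnj (mat_apply (matrix_adjoint a) g k))" for N
  proof -
    have "h2_inner (mat_apply a (h2_trunc N f)) g = (\<Sum>m. \<Sum>k<N. f k * (a m k * cnj (g m)))"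
      unfolding h2_inner_def mat_apply_h2_trunc by (simp add: sum_distrib_left sum_distrib_right mult_ac)
    also have "\<dots> = (\<Sum>k<N. \<Sum>m. f k * (a m k * cnj (g m)))"
      by (rule suminf_sum) (intro summable_mult col_inner)
    also have "\<dots> = (\<Sum>k<N. f k * (\<Sum>m. a m k * cnj (g m)))"
      by (simp add: suminf_mult[OF col_inner])
    also have "\<dots> = (\<Sum>k<N. f k * cnj (mat_apply (matrix_adjoint a) g k))"
      unfolding mat_apply_def suminf_cnj[OF A'.row_summable[OF g]] by (simp add: matrix_adjoint_def)
    finally show ?thesis .
  qed
  have "(\<lambda>N. h2_inner (mat_apply a (h2_trunc N f)) g) \<longlonglongrightarrow> h2_inner (mat_apply a f) g"
    by (rule h2_inner_tendsto_left[OF A.mat_apply_H2(1)[OF H2_trunc] A.mat_apply_H2(1)[OF f] g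
        h2_dist2_trunc_tendsto_if_lipschitz[OF A.mat_apply_H2(1) A.h2_dist2_mat_apply_le f]])
  hence "(\<lambda>N. \<Sum>k<N. f k * cnj (mat_apply (matrix_adjoint a) g k)) \<longlonglongrightarrow> h2_inner (mat_apply a f) g"
    unfolding trunc_inner .
  moreover have "(\<lambda>N. \<Sum>k<N. f k * cnj (mat_apply (matrix_adjoint a) g k)) \<longlonglongrightarrow>
      h2_inner f (mat_apply (matrix_adjoint a) g)"
    unfolding h2_inner_def by (intro summable_LIMSEQ summable_h2_inner f A'.mat_apply_H2(1) g)
  ultimately show "h2_inner (mat_apply a f) g = h2_inner f (mat_apply (matrix_adjoint a) g)"
    by (rule LIMSEQ_unique)
qed

section \<open>Toeplitz matrices of bounded symbols\<close>

definition toeplitz_matrix :: "(complex \<Rightarrow> complex) \<Rightarrow> nat \<Rightarrow> nat \<Rightarrow> complex" where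
  "toeplitz_matrix \<phi> m k = fourier_coeff \<phi> (int m - int k)"

lemma toeplitz_eq_mat_apply: "toeplitz \<phi> = mat_apply (toeplitz_matrix \<phi>)"
  unfolding toeplitz_def mat_apply_def toeplitz_matrix_def by simp

lemma toeplitz_unit_vec: "toeplitz \<phi> (unit_vec n) = (\<lambda>m. fourier_coeff \<phi> (int m - int n))"
  unfolding toeplitz_def by simp

lemma L_infty_circle_bound:
  assumes "L_infty_circle \<phi>"
  obtains M where "M \<ge> 1" "AE t in lborel. t \<in> {0..2*pi} \<longrightarrow> cmod (\<phi> (cis t)) \<le> M"
proof -
  from assms obtain M0 where "AE t in lborel. t \<in> {0..2*pi} \<longrightarrow> cmod (\<phi> (cis t)) \<le> M0"
    unfolding L_infty_circle_def by blast
  hence "AE t in lborel. t \<in> {0..2*pi} \<longrightarrow> cmod (\<phi> (cis t)) \<le> max M0 1"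
    by eventually_elim auto
  thus ?thesis using that[of "max M0 1"] by auto
qed

lemma borel_measurable_L_infty_circle [measurable]:
  "L_infty_circle \<phi> \<Longrightarrow> (\<lambda>t. \<phi> (cis t)) \<in> borel_measurable lborel"
  by (simp add: L_infty_circle_def)

lemma set_integrable_L_infty_circle_mult:
  assumes phi: "L_infty_circle \<phi>" and c: "continuous_on UNIV c"
  shows "set_integrable lborel {0..2*pi} (\<lambda>t. \<phi> (cis t) * c t)"
proof -
  obtain M where M: "M \<ge> 1" "AE t in lborel. t \<in> {0..2*pi} \<longrightarrow> cmod (\<phi> (cis t)) \<le> M"
    using L_infty_circle_bound[OF phi] by blast
  obtain B where B: "B \<ge> 0" "\<And>t. t \<in> {0..2*pi} \<Longrightarrow> norm (c t) \<le> B"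
    using continuous_on_compact_bound[of "{0..2*pi}" c] c continuous_on_subset by blast
  have "set_integrable lborel {0..2*pi} (\<lambda>t. complex_of_real (M * B))"
    by (rule borel_integrable_atLeastAtMost') (intro continuous_intros)
  moreover have "set_borel_measurable lborel {0..2*pi} (\<lambda>t. \<phi> (cis t) * c t)"
    unfolding set_borel_measurable_def using phi borel_measurable_continuous_onI[OF c] by measurable
  moreover have "AE t in lborel. t \<in> {0..2*pi} \<longrightarrow> norm (\<phi> (cis t) * c t) \<le> norm (complex_of_real (M * B))"
    using M(2)
  proof eventually_elim
    case (elim t)
    show ?case
    proof
      assume t: "t \<in> {0..2*pi}"
      have "norm (\<phi> (cis t) * c t) \<le> M * B"
        unfolding norm_mult by (intro mult_mono B(2) t elim[rule_format]) (use M B in auto)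
      moreover have "norm (complex_of_real (M * B)) = M * B"
        using M B by (simp only: norm_of_real abs_of_nonneg mult_nonneg_nonneg)
      ultimately show "norm (\<phi> (cis t) * c t) \<le> norm (complex_of_real (M * B))"
        by simp
    qed
  qed
  ultimately show ?thesis by (rule set_integrable_bound)
qed

lemma norm_set_integral_le:
  fixes g :: "real \<Rightarrow> complex"
  assumes gi: "set_integrable lborel A g" and hi: "set_integrable lborel A h"
    and le: "AE t in lborel. t \<in> A \<longrightarrow> norm (g t) \<le> h t"
  shows "norm (LINT t:A|lborel. g t) \<le> (LINT t:A|lborel. h t)"
proof -
  have "norm (LINT t:A|lborel. g t) \<le> (LINT t:A|lborel. norm (g t))"
    by (rule set_integral_norm_bound[OF gi])
  also have "\<dots> \<le> (LINT t:A|lborel. h t)"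
    by (rule set_integral_mono_AE[OF set_integrable_norm[OF gi] hi]) (use le in auto)
  finally show ?thesis .
qed

lemma norm_fourier_coeff_le:
  assumes phi: "L_infty_circle \<phi>" and M: "AE t in lborel. t \<in> {0..2*pi} \<longrightarrow> cmod (\<phi> (cis t)) \<le> M"
  shows "cmod (fourier_coeff \<phi> n) \<le> M"
proof -
  have "norm (LINT t:{0..2*pi}|lborel. \<phi> (cis t) * cis (- (of_int n * t))) \<le> (LINT t:{0..2*pi}|lborel. M)"
  proof (rule norm_set_integral_le)
    show "set_integrable lborel {0..2*pi} (\<lambda>t. \<phi> (cis t) * cis (- (of_int n * t)))"
      by (rule set_integrable_L_infty_circle_mult[OF phi]) (intro continuous_intros)
    show "set_integrable lborel {0..2*pi} (\<lambda>t. M)"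
      by (rule borel_integrable_atLeastAtMost') (intro continuous_intros)
  qed (use M in \<open>auto simp: norm_mult\<close>)
  also have "\<dots> = 2 * pi * M" by (subst set_integral_const) auto
  finally show ?thesis unfolding fourier_coeff_def by (simp add: norm_divide divide_le_eq mult_ac)
qed

lemma set_integral_norm_trig_poly_sq:
  fixes f :: "nat \<Rightarrow> complex"
  shows "(LINT t:{0..2*pi}|lborel. (cmod (\<Sum>k<N. f k * cis (real k * t)))\<^sup>2) =
    2 * pi * (\<Sum>k<N. (cmod (f k))\<^sup>2)"
proof -
  have "complex_of_real (LINT t:{0..2*pi}|lborel. (cmod (\<Sum>k<N. f k * cis (real k * t)))\<^sup>2) =
     (LINT t:{0..2*pi}|lborel. complex_of_real ((cmod (\<Sum>k<N. f k * cis (real k * t)))\<^sup>2))"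
    by (rule set_integral_complex_of_real[symmetric])
  also have "\<dots> = (LINT t:{0..2*pi}|lborel.
      (\<Sum>k<N. f k * cis (real k * t)) * cnj (\<Sum>k<N. f k * cis (real k * t)))"
    by (simp only: complex_norm_square)
  also have "\<dots> = 2 * pi * (\<Sum>k<N. f k * cnj (f k))" by (rule parseval_finite)
  also have "\<dots> = complex_of_real (2 * pi * (\<Sum>k<N. (cmod (f k))\<^sup>2))"
    by (simp only: of_real_mult of_real_sum complex_norm_square of_real_numeral)
  finally show ?thesis by (simp only: of_real_eq_iff)
qed

lemma toeplitz_form_eq_integral:
  assumes phi: "L_infty_circle \<phi>"
  shows "(\<Sum>m<K. \<Sum>k<N. fourier_coeff \<phi> (int m - int k) * f k * cnj (g m)) =
    (LINT t:{0..2*pi}|lborel. \<phi> (cis t) *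
      ((\<Sum>k<N. f k * cis (real k * t)) * cnj (\<Sum>m<K. g m * cis (real m * t)))) / (2 * pi)"
proof -
  define e where "e m k t = \<phi> (cis t) * ((f k * cnj (g m)) * cis (- (of_int (int m - int k) * t)))"
    for m k t
  have e_integrable: "set_integrable lborel {0..2*pi} (e m k)" for m k
    unfolding e_def by (rule set_integrable_L_infty_circle_mult[OF phi]) (intro continuous_intros)
  have expand: "\<phi> (cis t) * ((\<Sum>k<N. f k * cis (real k * t)) * cnj (\<Sum>m<K. g m * cis (real m * t))) =
      (\<Sum>m<K. \<Sum>k<N. e m k t)" for t
  proof -
    have "cis (real k * t) * cnj (cis (real m * t)) = cis (- (of_int (int m - int k) * t))" for k m
      by (simp add: cis_mult cis_cnj algebra_simps)
    thus ?thesis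
      unfolding e_def by (simp add: sum_product cnj_sum mult_ac sum.swap[of _ "{..<N}"] sum_distrib_left)
  qed
  have coeff: "fourier_coeff \<phi> (int m - int k) * f k * cnj (g m) =
      (LINT t:{0..2*pi}|lborel. e m k t) / (2 * pi)" for m k
  proof -
    have "e m k = (\<lambda>t. (f k * cnj (g m)) * (\<phi> (cis t) * cis (- (of_int (int m - int k) * t))))"
      by (simp add: e_def mult_ac fun_eq_iff)
    thus ?thesis unfolding fourier_coeff_def by (simp add: set_integral_mult_right mult_ac)
  qed
  have "(\<Sum>m<K. \<Sum>k<N. fourier_coeff \<phi> (int m - int k) * f k * cnj (g m)) =
      (\<Sum>m<K. \<Sum>k<N. LINT t:{0..2*pi}|lborel. e m k t) / (2 * pi)"
    unfolding coeff by (simp add: sum_divide_distrib)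
  also have "(\<Sum>m<K. \<Sum>k<N. LINT t:{0..2*pi}|lborel. e m k t) =
      (LINT t:{0..2*pi}|lborel. (\<Sum>m<K. \<Sum>k<N. e m k t))"
    by (subst set_lebesgue_integral_sum(1), simp, rule set_lebesgue_integral_sum(2), simp,
        rule e_integrable) (subst set_lebesgue_integral_sum(1), simp, rule e_integrable, simp)
  finally show ?thesis unfolding expand .
qed

lemma mult_le_weighted_squares:
  fixes x y l :: real
  assumes "l > 0"
  shows "x * y \<le> (l * x\<^sup>2 + 1 / l * y\<^sup>2) / 2"
proof -
  have "0 \<le> (l * x - y)\<^sup>2" by simp
  hence "2 * l * (x * y) \<le> (l * x)\<^sup>2 + y\<^sup>2"
    by (simp add: power2_eq_square algebra_simps)
  thus ?thesis using assms by (simp add: field_simps power2_eq_square)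
qed

lemma set_integral_weighted_norm_squares:
  fixes F G :: "real \<Rightarrow> complex"
  assumes "continuous_on UNIV F" "continuous_on UNIV G"
  shows "(LINT t:{0..2*pi}|lborel. c * (cmod (F t))\<^sup>2 + d * (cmod (G t))\<^sup>2) =
    c * (LINT t:{0..2*pi}|lborel. (cmod (F t))\<^sup>2) + d * (LINT t:{0..2*pi}|lborel. (cmod (G t))\<^sup>2)"
proof -
  have sq_integrable: "set_integrable lborel {0..2*pi} (\<lambda>t. (cmod (P t))\<^sup>2)"
    if "continuous_on UNIV P" for P :: "real \<Rightarrow> complex"
    by (rule borel_integrable_atLeastAtMost') (intro continuous_intros continuous_on_subset[OF that], auto)
  have "(LINT t:{0..2*pi}|lborel. c * (cmod (F t))\<^sup>2 + d * (cmod (G t))\<^sup>2) =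
      (LINT t:{0..2*pi}|lborel. c * (cmod (F t))\<^sup>2) + (LINT t:{0..2*pi}|lborel. d * (cmod (G t))\<^sup>2)"
    using sq_integrable[OF assms(1)] sq_integrable[OF assms(2)] by (simp add: set_integral_add(2))
  thus ?thesis by (simp only: set_integral_mult_right)
qed

lemma toeplitz_form_bound:
  assumes phi: "L_infty_circle \<phi>"
    and M: "AE t in lborel. t \<in> {0..2*pi} \<longrightarrow> cmod (\<phi> (cis t)) \<le> M" "M \<ge> 0" and l: "l > 0"
  shows "cmod (\<Sum>m<K. \<Sum>k<N. fourier_coeff \<phi> (int m - int k) * f k * cnj (g m))
     \<le> M / 2 * (l * (\<Sum>k<N. (cmod (f k))\<^sup>2) + 1 / l * (\<Sum>m<K. (cmod (g m))\<^sup>2))"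
proof -
  define F where "F t = (\<Sum>k<N. f k * cis (real k * t))" for t
  define G where "G t = (\<Sum>m<K. g m * cis (real m * t))" for t
  have cF: "continuous_on UNIV F" unfolding F_def by (intro continuous_intros)
  have cG: "continuous_on UNIV G" unfolding G_def by (intro continuous_intros)
  have "norm (LINT t:{0..2*pi}|lborel. \<phi> (cis t) * (F t * cnj (G t))) \<le>
      (LINT t:{0..2*pi}|lborel. M / 2 * l * (cmod (F t))\<^sup>2 + M / 2 * (1 / l) * (cmod (G t))\<^sup>2)"
  proof (rule norm_set_integral_le)
    show "set_integrable lborel {0..2*pi} (\<lambda>t. \<phi> (cis t) * (F t * cnj (G t)))"
      by (rule set_integrable_L_infty_circle_mult[OF phi]) (intro continuous_intros cF cG)
    show "set_integrable lborel {0..2*pi}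
        (\<lambda>t. M / 2 * l * (cmod (F t))\<^sup>2 + M / 2 * (1 / l) * (cmod (G t))\<^sup>2)"
      by (rule borel_integrable_atLeastAtMost')
        (intro continuous_intros continuous_on_subset[OF cF] continuous_on_subset[OF cG], auto)
    show "AE t in lborel. t \<in> {0..2*pi} \<longrightarrow> norm (\<phi> (cis t) * (F t * cnj (G t))) \<le>
        M / 2 * l * (cmod (F t))\<^sup>2 + M / 2 * (1 / l) * (cmod (G t))\<^sup>2"
      using M(1)
    proof eventually_elim
      case (elim t)
      show ?case
      proof
        assume "t \<in> {0..2*pi}"
        hence "cmod (\<phi> (cis t)) * (cmod (F t) * cmod (G t)) \<le>
            M * ((l * (cmod (F t))\<^sup>2 + 1 / l * (cmod (G t))\<^sup>2) / 2)"
          using elim M(2) by (intro mult_mono mult_le_weighted_squares l) auto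
        thus "norm (\<phi> (cis t) * (F t * cnj (G t))) \<le>
            M / 2 * l * (cmod (F t))\<^sup>2 + M / 2 * (1 / l) * (cmod (G t))\<^sup>2"
          by (simp add: norm_mult algebra_simps)
      qed
    qed
  qed
  also have "\<dots> = M / 2 * l * (LINT t:{0..2*pi}|lborel. (cmod (F t))\<^sup>2) +
      M / 2 * (1 / l) * (LINT t:{0..2*pi}|lborel. (cmod (G t))\<^sup>2)"
    by (rule set_integral_weighted_norm_squares[OF cF cG])
  also have "\<dots> = 2 * pi * (M / 2 * (l * (\<Sum>k<N. (cmod (f k))\<^sup>2) + 1 / l * (\<Sum>m<K. (cmod (g m))\<^sup>2)))"
    unfolding F_def G_def set_integral_norm_trig_poly_sq by (simp add: ring_distribs mult_ac)
  finally show ?thesis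
    unfolding toeplitz_form_eq_integral[OF phi] F_def[symmetric] G_def[symmetric]
    by (simp add: norm_divide pos_divide_le_eq mult.commute)
qed

lemma bounded_toeplitz_matrix:
  assumes phi: "L_infty_circle \<phi>"
    and M: "AE t in lborel. t \<in> {0..2*pi} \<longrightarrow> cmod (\<phi> (cis t)) \<le> M" "M > 0"
  shows "bounded_matrix (toeplitz_matrix \<phi>) (M\<^sup>2)"
    and "bounded_matrix (matrix_adjoint (toeplitz_matrix \<phi>)) (M\<^sup>2)"
  using bounded_matrix_if_form_bound[OF M(2), of "toeplitz_matrix \<phi>"]
    bounded_matrix_adjoint_if_form_bound[OF M(2), of "toeplitz_matrix \<phi>"]
    toeplitz_form_bound[OF phi M(1)] M(2) by (auto simp: toeplitz_matrix_def)

section \<open>The conjugation \<open>C\<close> and \<open>C\<close>-symmetry of Toeplitz operators\<close>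

lemma bounded_matrix_u_coeff:
  assumes a: "norm \<alpha> < 1" "\<alpha> \<noteq> 0"
  shows "bounded_matrix (u_coeff \<alpha>) 1"
proof
  fix h :: "nat \<Rightarrow> complex" and N K
  define w where "w j = (\<Sum>i<N. u_coeff \<alpha> j i * h i)" for j
  have w_sq: "complex_of_real ((cmod (w j))\<^sup>2) =
      (\<Sum>i<N. \<Sum>i'<N. (h i * cnj (h i')) * (u_coeff \<alpha> i j * cnj (u_coeff \<alpha> i' j)))" for j
    unfolding complex_norm_square w_def u_coeff_sym[of \<alpha> j]
    by (simp add: sum_product cnj_sum mult_ac)
  have "(\<lambda>j. complex_of_real ((cmod (w j))\<^sup>2)) sums
      (\<Sum>i<N. \<Sum>i'<N. (h i * cnj (h i')) * (if i = i' then 1 else 0))"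
    unfolding w_sq u_coeff_orthonormal[OF a, symmetric]
    by (intro sums_sum sums_mult summable_sums summable_norm_cancel[OF summable_mult_cnj_abs_summable]
        u_coeff_row_abs_summable[OF a])
  also have "(\<Sum>i<N. \<Sum>i'<N. (h i * cnj (h i')) * (if i = i' then 1 else 0)) =
      complex_of_real (\<Sum>i<N. (cmod (h i))\<^sup>2)"
    by (simp add: if_distrib sum.delta cong: if_cong) (simp add: complex_norm_square[symmetric])
  finally have "(\<lambda>j. (cmod (w j))\<^sup>2) sums (\<Sum>i<N. (cmod (h i))\<^sup>2)"
    by (simp only: sums_of_real_iff)
  hence "(\<Sum>j<K. (cmod (w j))\<^sup>2) \<le> (\<Sum>i<N. (cmod (h i))\<^sup>2)"
    using sum_le_suminf[of "\<lambda>j. (cmod (w j))\<^sup>2" "{..<K}"] by (auto simp: sums_iff)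
  thus "(\<Sum>i<K. (cmod (\<Sum>j<N. u_coeff \<alpha> i j * h j))\<^sup>2) \<le> 1 * (\<Sum>j<N. (cmod (h j))\<^sup>2)"
    unfolding w_def by simp
qed simp

lemma C_op_eq_mat_apply:
  assumes a: "norm \<alpha> < 1" "\<alpha> \<noteq> 0" and x: "x \<in> H2"
  shows "C_op \<alpha> x = mat_apply (u_coeff \<alpha>) (\<lambda>i. cnj (x i))"
proof
  fix j
  obtain B where "\<And>n. cmod (x n) \<le> B" using H2_bounded[OF x] by blast
  hence "W_op \<alpha> (J_H2 x) = (\<lambda>j. \<Sum>i. J_H2 x i * u_coeff \<alpha> i j)"
    by (intro W_op_eq_u_coeff_sum[OF a]) (simp add: J_H2_def)
  hence "C_op \<alpha> x j = (\<Sum>i. cnj (x i) * u_coeff \<alpha> i j)"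
    unfolding C_op_def by (simp add: J_H2_def)
  also have "(\<lambda>i. cnj (x i) * u_coeff \<alpha> i j) = (\<lambda>i. u_coeff \<alpha> j i * cnj (x i))"
    by (rule ext) (metis mult.commute u_coeff_sym)
  finally show "C_op \<alpha> x j = mat_apply (u_coeff \<alpha>) (\<lambda>i. cnj (x i)) j"
    unfolding mat_apply_def .
qed

lemma C_op_unit_vec:
  assumes "norm \<alpha> < 1" "\<alpha> \<noteq> 0"
  shows "C_op \<alpha> (unit_vec n) = (\<lambda>j. u_coeff \<alpha> n j)"
proof -
  have "cnj (unit_vec n i) = unit_vec n i" for i by (simp add: unit_vec_def)
  thus ?thesis
    unfolding C_op_eq_mat_apply[OF assms H2_unit_vec] mat_apply_def by (simp add: u_coeff_sym)
qed

context
  fixes \<alpha> :: complex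
  assumes a: "norm \<alpha> < 1" "\<alpha> \<noteq> 0"
begin

interpretation U: bounded_matrix "u_coeff \<alpha>" 1
  by (rule bounded_matrix_u_coeff[OF a])

lemma H2_C_op: "x \<in> H2 \<Longrightarrow> C_op \<alpha> x \<in> H2"
  by (simp add: C_op_eq_mat_apply[OF a] U.mat_apply_H2(1) H2_cnj)

lemma h2_dist2_C_op_le:
  "x \<in> H2 \<Longrightarrow> y \<in> H2 \<Longrightarrow> h2_dist2 (C_op \<alpha> x) (C_op \<alpha> y) \<le> h2_dist2 x y"
  using U.h2_dist2_mat_apply_le[OF H2_cnj H2_cnj] by (simp add: C_op_eq_mat_apply[OF a])

lemma C_op_sum:
  assumes "\<And>k. k \<in> K \<Longrightarrow> y k \<in> H2"
  shows "C_op \<alpha> (\<lambda>j. \<Sum>k\<in>K. c k * y k j) = (\<lambda>j. \<Sum>k\<in>K. cnj (c k) * C_op \<alpha> (y k) j)"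
proof -
  have "C_op \<alpha> (\<lambda>j. \<Sum>k\<in>K. c k * y k j) = mat_apply (u_coeff \<alpha>) (\<lambda>j. \<Sum>k\<in>K. cnj (c k) * cnj (y k j))"
    by (simp add: C_op_eq_mat_apply[OF a H2_sum[OF assms]] cnj_sum)
  also have "\<dots> = (\<lambda>j. \<Sum>k\<in>K. cnj (c k) * mat_apply (u_coeff \<alpha>) (\<lambda>i. cnj (y k i)) j)"
    by (rule U.mat_apply_sum) (rule H2_cnj[OF assms])
  finally show ?thesis by (simp add: C_op_eq_mat_apply[OF a assms])
qed

lemma u_toeplitz_suminf_swap:
  fixes c :: "int \<Rightarrow> complex"
  assumes cM: "\<And>n. cmod (c n) \<le> M"
  shows "(\<Sum>j. u_coeff \<alpha> m j * (\<Sum>i. c (int i - int j) * cnj (u_coeff \<alpha> n i))) =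
    (\<Sum>i. \<Sum>j. u_coeff \<alpha> m j * c (int i - int j) * cnj (u_coeff \<alpha> i n))"
proof -
  define f where "f j i = u_coeff \<alpha> m j * c (int i - int j) * cnj (u_coeff \<alpha> i n)" for j i
  define Cn where "Cn = (\<Sum>i. norm (u_coeff \<alpha> i n))"
  have col: "summable (\<lambda>i. norm (u_coeff \<alpha> i n))" by (rule u_coeff_col_abs_summable[OF a])
  have f_le: "norm (f j i) \<le> (norm (u_coeff \<alpha> m j) * M) * norm (u_coeff \<alpha> i n)" for j i
    unfolding f_def norm_mult complex_mod_cnj by (intro mult_right_mono mult_left_mono cM) auto
  have rows: "summable (\<lambda>i. norm (f j i))" for j
    by (rule summable_comparison_test[OF _ summable_mult[OF col]]) (use f_le in auto)
  have row_le: "(\<Sum>i. norm (f j i)) \<le> norm (u_coeff \<alpha> m j) * M * Cn" for j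
    unfolding Cn_def using suminf_le[OF f_le rows summable_mult[OF col]] suminf_mult[OF col] by simp
  have total: "summable (\<lambda>j. \<Sum>i. norm (f j i))"
    by (rule summable_comparison_test[OF _
          summable_mult2[OF summable_mult2[OF u_coeff_row_abs_summable[OF a, of m], of M], of Cn]])
      (use row_le suminf_nonneg[OF rows] in auto)
  have "u_coeff \<alpha> m j * (\<Sum>i. c (int i - int j) * cnj (u_coeff \<alpha> n i)) = (\<Sum>i. f j i)" for j
  proof -
    have "summable (\<lambda>i. c (int i - int j) * cnj (u_coeff \<alpha> i n))"
      by (rule summable_norm_cancel, rule summable_comparison_test[OF _ summable_mult[OF col, of M]])
        (auto simp: norm_mult intro!: mult_right_mono cM)
    from suminf_mult[OF this, of "u_coeff \<alpha> m j"] show ?thesis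
      by (simp add: f_def u_coeff_sym[of \<alpha> n] mult_ac)
  qed
  hence "(\<Sum>j. u_coeff \<alpha> m j * (\<Sum>i. c (int i - int j) * cnj (u_coeff \<alpha> n i))) = (\<Sum>j. \<Sum>i. f j i)"
    by simp
  also have "\<dots> = (\<Sum>i. \<Sum>j. f j i)" by (rule suminf_swap_abs_summable(1)[OF rows total])
  finally show ?thesis by (simp add: f_def)
qed

text \<open>The coefficients of \<open>S g\<close> are forced by adjointness: \<open>S g i = \<langle>S g, z\<^sup>i\<rangle> = conj \<langle>T\<^sub>\<phi> z\<^sup>i, g\<rangle>\<close>.\<close>

lemma C_adjoint_C_unit_vec:
  assumes cM: "\<And>n. cmod (fourier_coeff \<phi> n) \<le> M" and adj: "is_adjoint (toeplitz \<phi>) S"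
  shows "C_op \<alpha> (S (C_op \<alpha> (unit_vec n))) m =
    (\<Sum>i. \<Sum>j. u_coeff \<alpha> m j * fourier_coeff \<phi> (int i - int j) * cnj (u_coeff \<alpha> i n))"
proof -
  define g where "g = (\<lambda>j. u_coeff \<alpha> n j)"
  have gH: "g \<in> H2" unfolding g_def by (rule H2_if_abs_summable[OF u_coeff_row_abs_summable[OF a]])
  have SgH: "S g \<in> H2" using adj gH unfolding is_adjoint_def by blast
  have Sg: "cnj (S g j) = (\<Sum>i. fourier_coeff \<phi> (int i - int j) * cnj (u_coeff \<alpha> n i))" for j
  proof -
    have "cnj (S g j) = h2_inner (unit_vec j) (S g)" by (simp add: h2_inner_def)
    also have "\<dots> = h2_inner (toeplitz \<phi> (unit_vec j)) g"
      using adj H2_unit_vec gH unfolding is_adjoint_def by metis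
    finally show ?thesis unfolding h2_inner_def toeplitz_unit_vec g_def .
  qed
  have "C_op \<alpha> (S (C_op \<alpha> (unit_vec n))) m = (\<Sum>j. u_coeff \<alpha> m j * cnj (S g j))"
    unfolding C_op_unit_vec[OF a] g_def[symmetric] C_op_eq_mat_apply[OF a SgH] mat_apply_def ..
  also have "\<dots> = (\<Sum>i. \<Sum>j. u_coeff \<alpha> m j * fourier_coeff \<phi> (int i - int j) * cnj (u_coeff \<alpha> i n))"
    unfolding Sg by (rule u_toeplitz_suminf_swap[OF cM])
  finally show ?thesis .
qed

lemma h2_dist2_C_mat_apply_C_le:
  assumes s: "bounded_matrix s B" and x: "x \<in> H2" and y: "y \<in> H2"
  shows "h2_dist2 (C_op \<alpha> (mat_apply s (C_op \<alpha> x))) (C_op \<alpha> (mat_apply s (C_op \<alpha> y))) \<le>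
    B * h2_dist2 x y"
proof -
  interpret s: bounded_matrix s B by (fact s)
  have "h2_dist2 (C_op \<alpha> (mat_apply s (C_op \<alpha> x))) (C_op \<alpha> (mat_apply s (C_op \<alpha> y))) \<le>
      h2_dist2 (mat_apply s (C_op \<alpha> x)) (mat_apply s (C_op \<alpha> y))"
    by (intro h2_dist2_C_op_le s.mat_apply_H2(1) H2_C_op x y)
  also have "\<dots> \<le> B * h2_dist2 (C_op \<alpha> x) (C_op \<alpha> y)"
    by (intro s.h2_dist2_mat_apply_le H2_C_op x y)
  also have "\<dots> \<le> B * h2_dist2 x y"
    by (intro mult_left_mono h2_dist2_C_op_le x y s.bound_nonneg)
  finally show ?thesis .
qed

lemma C_mat_apply_C_h2_trunc:
  assumes s: "bounded_matrix s B"
  shows "C_op \<alpha> (mat_apply s (C_op \<alpha> (h2_trunc N f))) =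
    (\<lambda>m. \<Sum>k<N. f k * C_op \<alpha> (mat_apply s (C_op \<alpha> (unit_vec k))) m)"
proof -
  interpret s: bounded_matrix s B by (fact s)
  have C_trunc: "C_op \<alpha> (h2_trunc N f) = (\<lambda>j. \<Sum>k<N. cnj (f k) * C_op \<alpha> (unit_vec k) j)"
    unfolding h2_trunc_eq_sum_unit_vec by (rule C_op_sum) (rule H2_unit_vec)
  have "mat_apply s (C_op \<alpha> (h2_trunc N f)) =
      (\<lambda>i. \<Sum>k<N. cnj (f k) * mat_apply s (C_op \<alpha> (unit_vec k)) i)"
    unfolding C_trunc by (rule s.mat_apply_sum) (intro H2_C_op H2_unit_vec)
  hence "C_op \<alpha> (mat_apply s (C_op \<alpha> (h2_trunc N f))) =
      (\<lambda>m. \<Sum>k<N. cnj (cnj (f k)) * C_op \<alpha> (mat_apply s (C_op \<alpha> (unit_vec k))) m)"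
    by (simp only:) (rule C_op_sum, intro s.mat_apply_H2(1) H2_C_op H2_unit_vec)
  thus ?thesis by simp
qed

text \<open>\<open>C S C\<close> is linear and bounded, so it is determined by its values on the basis.\<close>

lemma C_mat_apply_C_eq_if_eq_on_unit_vecs:
  assumes s: "bounded_matrix s B" and t: "bounded_matrix t B'"
    and unit: "\<And>n. C_op \<alpha> (mat_apply s (C_op \<alpha> (unit_vec n))) = mat_apply t (unit_vec n)"
    and f: "f \<in> H2"
  shows "C_op \<alpha> (mat_apply s (C_op \<alpha> f)) = mat_apply t f"
proof
  fix m
  interpret s: bounded_matrix s B by (fact s)
  interpret t: bounded_matrix t B' by (fact t)
  have H2_CSC: "C_op \<alpha> (mat_apply s (C_op \<alpha> x)) \<in> H2" if "x \<in> H2" for x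
    by (intro H2_C_op s.mat_apply_H2(1) that)
  have CSC_lim: "(\<lambda>N. C_op \<alpha> (mat_apply s (C_op \<alpha> (h2_trunc N f))) m) \<longlonglongrightarrow>
      C_op \<alpha> (mat_apply s (C_op \<alpha> f)) m"
    by (intro tendsto_coordinate_if_h2_dist2 H2_CSC H2_trunc f
        h2_dist2_trunc_tendsto_if_lipschitz[OF H2_CSC h2_dist2_C_mat_apply_C_le[OF s]])
  have T_lim: "(\<lambda>N. mat_apply t (h2_trunc N f) m) \<longlonglongrightarrow> mat_apply t f m"
    by (intro tendsto_coordinate_if_h2_dist2 t.mat_apply_H2(1) H2_trunc f
        h2_dist2_trunc_tendsto_if_lipschitz[OF t.mat_apply_H2(1) t.h2_dist2_mat_apply_le])
  have "mat_apply t (h2_trunc N f) = (\<lambda>m. \<Sum>k<N. f k * mat_apply t (unit_vec k) m)" for N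
    unfolding h2_trunc_eq_sum_unit_vec by (rule t.mat_apply_sum) (rule H2_unit_vec)
  hence "(\<lambda>N. C_op \<alpha> (mat_apply s (C_op \<alpha> (h2_trunc N f))) m) = (\<lambda>N. mat_apply t (h2_trunc N f) m)"
    unfolding C_mat_apply_C_h2_trunc[OF s] unit by simp
  with CSC_lim T_lim show "C_op \<alpha> (mat_apply s (C_op \<alpha> f)) m = mat_apply t f m"
    by (metis LIMSEQ_unique)
qed

lemma coeff_identity_if_C_symmetric_toeplitz:
  assumes cM: "\<And>n. cmod (fourier_coeff \<phi> n) \<le> M" and sym: "C_symmetric (C_op \<alpha>) (toeplitz \<phi>)"
  shows "fourier_coeff \<phi> (int m - int n) =
    (\<Sum>i. \<Sum>j. u_coeff \<alpha> m j * fourier_coeff \<phi> (int i - int j) * cnj (u_coeff \<alpha> i n))"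
proof -
  obtain S where adj: "is_adjoint (toeplitz \<phi>) S"
    and CSC: "\<forall>f\<in>H2. C_op \<alpha> (S (C_op \<alpha> f)) = toeplitz \<phi> f"
    using sym unfolding C_symmetric_def by blast
  have "fourier_coeff \<phi> (int m - int n) = toeplitz \<phi> (unit_vec n) m"
    by (simp add: toeplitz_unit_vec)
  also have "\<dots> = C_op \<alpha> (S (C_op \<alpha> (unit_vec n))) m" using CSC H2_unit_vec by simp
  also have "\<dots> = (\<Sum>i. \<Sum>j. u_coeff \<alpha> m j * fourier_coeff \<phi> (int i - int j) * cnj (u_coeff \<alpha> i n))"
    by (rule C_adjoint_C_unit_vec[OF cM adj])
  finally show ?thesis .
qed

lemma C_symmetric_toeplitz_if_coeff_identity:
  assumes phi: "L_infty_circle \<phi>"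
    and hyp: "\<And>m n. fourier_coeff \<phi> (int m - int n) =
      (\<Sum>i. \<Sum>j. u_coeff \<alpha> m j * fourier_coeff \<phi> (int i - int j) * cnj (u_coeff \<alpha> i n))"
  shows "C_symmetric (C_op \<alpha>) (toeplitz \<phi>)"
proof -
  obtain M where M: "AE t in lborel. t \<in> {0..2*pi} \<longrightarrow> cmod (\<phi> (cis t)) \<le> M" "M \<ge> 1"
    using L_infty_circle_bound[OF phi] by blast
  have T: "bounded_matrix (toeplitz_matrix \<phi>) (M\<^sup>2)"
    and S: "bounded_matrix (matrix_adjoint (toeplitz_matrix \<phi>)) (M\<^sup>2)"
    using bounded_toeplitz_matrix[OF phi M(1)] M(2) by auto
  define S where "S = mat_apply (matrix_adjoint (toeplitz_matrix \<phi>))"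
  have adj: "is_adjoint (toeplitz \<phi>) S"
    unfolding S_def toeplitz_eq_mat_apply by (rule is_adjoint_mat_apply[OF T S])
  have "C_op \<alpha> (S (C_op \<alpha> (unit_vec n))) = toeplitz \<phi> (unit_vec n)" for n
    using C_adjoint_C_unit_vec[OF norm_fourier_coeff_le[OF phi M(1)] adj]
    by (simp add: toeplitz_unit_vec hyp[symmetric] fun_eq_iff)
  hence "C_op \<alpha> (S (C_op \<alpha> f)) = toeplitz \<phi> f" if "f \<in> H2" for f
    unfolding S_def toeplitz_eq_mat_apply
    by (rule C_mat_apply_C_eq_if_eq_on_unit_vecs[OF S T _ that])
  with adj show ?thesis unfolding C_symmetric_def by blast
qed

end

theorem proposition8p3:
  fixes \<alpha> :: complex and \<phi> :: "complex \<Rightarrow> complex"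
  assumes "\<alpha> \<in> ball 0 1" and "\<alpha> \<noteq> 0" and "L_infty_circle \<phi>"
  shows "C_symmetric (C_op \<alpha>) (toeplitz \<phi>) \<longleftrightarrow>
    (\<forall>m n :: nat. fourier_coeff \<phi> (int m - int n) =
       (\<Sum>i. \<Sum>j. u_coeff \<alpha> m j * fourier_coeff \<phi> (int i - int j) * cnj (u_coeff \<alpha> i n)))"
proof -
  have a: "norm \<alpha> < 1" "\<alpha> \<noteq> 0" using assms(1,2) by auto
  obtain M where "AE t in lborel. t \<in> {0..2*pi} \<longrightarrow> cmod (\<phi> (cis t)) \<le> M"
    using L_infty_circle_bound[OF assms(3)] by blast
  note coeff_le = norm_fourier_coeff_le[OF assms(3) this]
  show ?thesis
    using coeff_identity_if_C_symmetric_toeplitz[OF a coeff_le]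
      C_symmetric_toeplitz_if_coeff_identity[OF a assms(3)] by blast
qed

end
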